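(* Under the setting, assumptions (A1)–(A2) and the algorithm PDAc-L described in the context, the sequence $\{(x_n,y_n)\}$ generated by PDAc-L converges to a saddle point of $\mathcal L$, i.e. to a point of $\Omega$.
   Context: Let $f:\mathbb{R}^p\to(-\infty,+\infty]$ and $g:\mathbb{R}^q\to(-\infty,+\infty]$ be proper closed convex functions; $f^*(y)=\sup_u\{\langle y,u\rangle-f(u)\}$ is the Fenchel conjugate, $\mathrm{dom}(h)=\{x:h(x)<+\infty\}$, and for $\lambda>0$, $\mathrm{Prox}_{\lambda h}(x)=\arg\min_u\{h(u)+\frac{1}{2\lambda}\|u-x\|^2\}$. Let $\Phi:\mathrm{dom}(g)\times\mathrm{dom}(f^* )\to\mathbb{R}$ be continuous and $\mathcal L(x,y)=g(x)+\Phi(x,y)-f^*(y)$. Let $\Omega$ be the set of $(x^\star,y^\star)\in\mathrm{dom}(g)\times\mathrm{dom}(f^* )$ with $-\nabla_x\Phi(x^\star,y^\star)\in\partial g(x^\star)$ and $\nabla_y\Phi(x^\star,y^\star)\in\partial f^*(y^\star)$ (saddle points of $\mathcal L$). Assume: (A1) $\Omega\neq\emptyset$, $\mathrm{dom}(g)\times\mathrm{dom}(f^* )\subseteq\mathrm{dom}(\Phi)$, and $\mathcal L(x^\star,y^\star)$ is finite; (A2) for each $y\in\mathrm{dom}(f^* )$, $\Phi(\cdot,y)$ is convex and differentiable, for each $x\in\mathrm{dom}(g)$, $\Phi(x,\cdot)$ is concave and differentiable, and for all bounded $\mathcal X\subset\mathbb R^q$, $\mathcal Y\subset\mathbb R^p$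 there exist $L_{yy},L_{xx}\ge 0$, $L_{xy}>0$ with $\|\nabla_y\Phi(x,y)-\nabla_y\Phi(x,\tilde y)\|\le L_{yy}\|y-\tilde y\|$ and $\|\nabla_x\Phi(x,y)-\nabla_x\Phi(\tilde x,\tilde y)\|\le L_{xx}\|x-\tilde x\|+L_{xy}\|y-\tilde y\|$ for all $x,\tilde x\in\mathcal X\cap\mathrm{dom}(g)$, $y,\tilde y\in\mathcal Y\cap\mathrm{dom}(f^* )$. Algorithm PDAc-L: choose $\psi\in(1,1+\sqrt3)$, $\xi>0$, $\varphi>1$ with $\omega:=2\psi-\xi-\frac{\psi^3\varphi}{1+\psi}>0$, $\tau_{\max}>0$, $\nu\in(0,1)$, $\mu\in(0,1)$, $\eta\in[0,1)$, an integer $M\ge1$, $\beta>0$, $x_0\in\mathrm{dom}(g)$, $y_0\in\mathrm{dom}(f^* )$, $\tau_0\in(0,\tau_{\max}]$; set $z_0=x_0$, $\delta_0=1$. For $n=1,2,\dots$: (1) $z_n=\frac{\psi-1}{\psi}x_{n-1}+\frac1\psi z_{n-1}$ and $x_n=\mathrm{Prox}_{\tau_{n-1}g}(z_n-\tau_{n-1}\nabla_x\Phi(x_{n-1},y_{n-1}))$. (2) Let $\tau=\min\{\varphi\tau_{n-1},\tau_{\max}\}$; set $\tau_n=\tau\mu^i$ and $y_n=\mathrm{Prox}_{\beta\tau_n f^*}(y_{n-1}+\beta\tau_n\nabla_y\Phi(x_n,y_{n-1}))$, where $i$ is the smallest nonnegative integer such that $\frac{\tau_n\tau_{n-1}}{\xi}\|\theta_n\|^2+2\tau_n\Phi_n^y\le\nu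 r_n+(1-\nu)c_n$, with $\theta_n=\nabla_x\Phi(x_n,y_n)-\nabla_x\Phi(x_{n-1},y_{n-1})$, $\Phi_n^y=\Phi(x_n,y_{n-1})+\langle\nabla_y\Phi(x_n,y_{n-1}),y_n-y_{n-1}\rangle-\Phi(x_n,y_n)$, $r_n=\omega\delta_{n-1}\|x_n-x_{n-1}\|^2+\frac1\beta\|y_n-y_{n-1}\|^2$, $c_n=\frac{\eta}{|\mathcal I_n|}\sum_{i\in\mathcal I_n}r_i$, $\mathcal I_n=\{n-1,n-2,\dots,\max\{n-M,1\}\}$ (the $r_i$ for $i<n$ being the values from earlier iterations; for $n=1$, $\mathcal I_1=\emptyset$ and $c_1:=0$). (3) $\delta_n=\tau_n/\tau_{n-1}$. *)

theory Defs
  imports "HOL-Analysis.Analysis"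
begin

text \<open>Functions R^n -> (-inf,+inf] are modelled as ereal-valued functions that never take -inf.\<close>

definition edom :: "('a \<Rightarrow> ereal) \<Rightarrow> 'a set" where
  "edom h = {x. h x < \<infinity>}"

definition proper_fun :: "('a \<Rightarrow> ereal) \<Rightarrow> bool" where
  "proper_fun h \<longleftrightarrow> (\<forall>x. h x \<noteq> -\<infinity>) \<and> (\<exists>x. h x < \<infinity>)"

definition eepigraph :: "('a \<Rightarrow> ereal) \<Rightarrow> ('a \<times> real) set" where
  "eepigraph h = {(x, t). h x \<le> ereal t}"

definition convex_fun :: "('a::real_vector \<Rightarrow> ereal) \<Rightarrow> bool" where
  "convex_fun h \<longleftrightarrow> convex (eepigraph h)"

definition closed_fun :: "('a::real_normed_vector \<Rightarrow> ereal) \<Rightarrow> bool" where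
  "closed_fun h \<longleftrightarrow> closed (eepigraph h)"

definition proper_closed_convex :: "('a::real_normed_vector \<Rightarrow> ereal) \<Rightarrow> bool" where
  "proper_closed_convex h \<longleftrightarrow> proper_fun h \<and> closed_fun h \<and> convex_fun h"

definition fenchel_conj :: "('a::real_inner \<Rightarrow> ereal) \<Rightarrow> 'a \<Rightarrow> ereal" where
  "fenchel_conj f y = (SUP u. ereal (inner y u) - f u)"

definition subdiff :: "('a::real_inner \<Rightarrow> ereal) \<Rightarrow> 'a \<Rightarrow> 'a set" where
  "subdiff h x = {v. h x \<noteq> \<infinity> \<and> h x \<noteq> -\<infinity> \<and>
                     (\<forall>u. h x + ereal (inner v (u - x)) \<le> h u)}"

definition Prox :: "real \<Rightarrow> ('a::real_normed_vector \<Rightarrow> ereal) \<Rightarrow> 'a \<Rightarrow> 'a" where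
  "Prox lam h x = (THE u. \<forall>v. h u + ereal ((norm (u - x))\<^sup>2 / (2 * lam))
                                 \<le> h v + ereal ((norm (v - x))\<^sup>2 / (2 * lam)))"

text \<open>gx, gy are the partial gradients of Phi (linked to Phi by hypotheses of the theorem).\<close>
definition saddle_set ::
  "('a::real_inner \<Rightarrow> ereal) \<Rightarrow> ('b::real_inner \<Rightarrow> ereal) \<Rightarrow>
   ('a \<Rightarrow> 'b \<Rightarrow> 'a) \<Rightarrow> ('a \<Rightarrow> 'b \<Rightarrow> 'b) \<Rightarrow> ('a \<times> 'b) set" where
  "saddle_set g fs gx gy =
     {(xs, ys). xs \<in> edom g \<and> ys \<in> edom fs \<and>
                - gx xs ys \<in> subdiff g xs \<and> gy xs ys \<in> subdiff fs ys}"

definition pdacl_r :: "real \<Rightarrow> real \<Rightarrow> real \<Rightarrow> 'a::real_normed_vector \<Rightarrow> 'a \<Rightarrow>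
                       'b::real_normed_vector \<Rightarrow> 'b \<Rightarrow> real" where
  "pdacl_r \<omega> \<beta> dprev xn xp yn yp =
     \<omega> * dprev * (norm (xn - xp))\<^sup>2 + (1 / \<beta>) * (norm (yn - yp))\<^sup>2"

definition pdacl_c :: "real \<Rightarrow> nat \<Rightarrow> (nat \<Rightarrow> real) \<Rightarrow> nat \<Rightarrow> real" where
  "pdacl_c \<eta> M r n =
     (if n \<le> 1 then 0
      else \<eta> / real (card {max (n - M) 1..<n}) * (\<Sum>i\<in>{max (n - M) 1..<n}. r i))"

text \<open>The line-search test of step (2) for trial step t and trial point yt at iteration n.\<close>
definition pdacl_test ::
  "('a::real_inner \<Rightarrow> 'b::real_inner \<Rightarrow> real) \<Rightarrow> ('a \<Rightarrow> 'b \<Rightarrow> 'a) \<Rightarrow> ('a \<Rightarrow> 'b \<Rightarrow> 'b) \<Rightarrow>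
   real \<Rightarrow> real \<Rightarrow> real \<Rightarrow> real \<Rightarrow> real \<Rightarrow> nat \<Rightarrow>
   (nat \<Rightarrow> 'a) \<Rightarrow> (nat \<Rightarrow> 'b) \<Rightarrow> (nat \<Rightarrow> real) \<Rightarrow> (nat \<Rightarrow> real) \<Rightarrow>
   nat \<Rightarrow> real \<Rightarrow> 'b \<Rightarrow> bool" where
  "pdacl_test \<Phi> gx gy \<xi> \<omega> \<nu> \<eta> \<beta> M x y \<tau> \<delta> n t yt \<longleftrightarrow>
     (let \<theta> = gx (x n) yt - gx (x (n - 1)) (y (n - 1));
          \<Phi>y = \<Phi> (x n) (y (n - 1)) + inner (gy (x n) (y (n - 1))) (yt - y (n - 1)) - \<Phi> (x n) yt;
          rn = pdacl_r \<omega> \<beta> (\<delta> (n - 1)) (x n) (x (n - 1)) yt (y (n - 1));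
          r = (\<lambda>i. pdacl_r \<omega> \<beta> (\<delta> (i - 1)) (x i) (x (i - 1)) (y i) (y (i - 1)));
          cn = pdacl_c \<eta> M r n
      in t * \<tau> (n - 1) / \<xi> * (norm \<theta>)\<^sup>2 + 2 * t * \<Phi>y \<le> \<nu> * rn + (1 - \<nu>) * cn)"

definition pdacl_seq ::
  "('a::real_inner \<Rightarrow> ereal) \<Rightarrow> ('b::real_inner \<Rightarrow> ereal) \<Rightarrow>
   ('a \<Rightarrow> 'b \<Rightarrow> real) \<Rightarrow> ('a \<Rightarrow> 'b \<Rightarrow> 'a) \<Rightarrow> ('a \<Rightarrow> 'b \<Rightarrow> 'b) \<Rightarrow>
   real \<Rightarrow> real \<Rightarrow> real \<Rightarrow> real \<Rightarrow> real \<Rightarrow> real \<Rightarrow> real \<Rightarrow> nat \<Rightarrow> real \<Rightarrow>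
   (nat \<Rightarrow> 'a) \<Rightarrow> (nat \<Rightarrow> 'b) \<Rightarrow> (nat \<Rightarrow> 'a) \<Rightarrow> (nat \<Rightarrow> real) \<Rightarrow> (nat \<Rightarrow> real) \<Rightarrow> bool" where
  "pdacl_seq g fs \<Phi> gx gy \<psi> \<xi> \<phi> \<tau>max \<nu> \<mu> \<eta> M \<beta> x y z \<tau> \<delta> \<longleftrightarrow>
     (let \<omega> = 2 * \<psi> - \<xi> - \<psi> ^ 3 * \<phi> / (1 + \<psi>) in
      z 0 = x 0 \<and> \<delta> 0 = 1 \<and>
      (\<forall>n\<ge>1.
         z n = ((\<psi> - 1) / \<psi>) *\<^sub>R x (n - 1) + (1 / \<psi>) *\<^sub>R z (n - 1) \<and>
         x n = Prox (\<tau> (n - 1)) g (z n - \<tau> (n - 1) *\<^sub>R gx (x (n - 1)) (y (n - 1))) \<and>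
         (let \<tau>b = min (\<phi> * \<tau> (n - 1)) \<tau>max;
              yt = (\<lambda>t. Prox (\<beta> * t) fs (y (n - 1) + (\<beta> * t) *\<^sub>R gy (x n) (y (n - 1))))
          in \<exists>i::nat.
               \<tau> n = \<tau>b * \<mu> ^ i \<and> y n = yt (\<tau> n) \<and>
               pdacl_test \<Phi> gx gy \<xi> \<omega> \<nu> \<eta> \<beta> M x y \<tau> \<delta> n (\<tau> n) (y n) \<and>
               (\<forall>j<i. \<not> pdacl_test \<Phi> gx gy \<xi> \<omega> \<nu> \<eta> \<beta> M x y \<tau> \<delta> n
                          (\<tau>b * \<mu> ^ j) (yt (\<tau>b * \<mu> ^ j)))) \<and>
         \<delta> n = \<tau> n / \<tau> (n - 1)))"

end

(* Fix a saddle point (xs, ys). The prox inequalities for x(n+1) and y(n), convexity-concavity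
   of Phi, the averaging z(n+1) = ((psi-1) x(n) + z(n)) / psi and the line-search test combine
   into the energy inequality
     E(n+1) + (1 - nu) r(n) <= E(n) + (1 - nu) c(n),
   E(n) = psi/(psi-1) |z(n+1) - xs|^2 + |y(n-1) - ys|^2 / beta + omega delta(n-1) |x(n) - x(n-1)|^2.
   Each r(i) enters at most M averages c(n) and eta < 1, so the r(n) are summable and the
   iterates are bounded. On bounded sets the gradients of Phi are Lipschitz, hence the line
   search accepts every step below a fixed threshold and tau(n) stays bounded away from 0.
   Consequently successive differences vanish, and closedness of g and f* shows that every
   cluster point is a saddle point. Taking such a cluster point as the reference point, the
   energy converges and tends to 0 along the subsequence, so the whole sequence converges. *)

theory Submission
  imports Defs
begin

lemma norm_add_square:
  "(norm (x + y))\<^sup>2 = (norm x)\<^sup>2 + 2 * inner x y + (norm (y::'a::real_inner))\<^sup>2"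
  by (simp add: power2_norm_eq_inner inner_add_left inner_add_right inner_commute)

lemma norm_diff_square:
  "(norm (x - y))\<^sup>2 = (norm x)\<^sup>2 - 2 * inner x y + (norm (y::'a::real_inner))\<^sup>2"
  by (simp add: power2_norm_eq_inner inner_diff_left inner_diff_right inner_commute)

lemma inner_three_points:
  fixes a b c :: "'a::real_inner"
  shows "2 * inner (b - a) (c - b) = (norm (a - c))\<^sup>2 - (norm (b - c))\<^sup>2 - (norm (b - a))\<^sup>2"
  unfolding power2_norm_eq_inner
  by (simp add: inner_diff_left inner_diff_right inner_commute algebra_simps)

lemma inner_ge_neg_norm_mult: "inner a v \<ge> - (norm a * norm v)"
  using norm_cauchy_schwarz[of "- a" v] by (simp add: inner_minus_left)

lemma inner_le_of_norm_le:
  fixes a b :: "'a::real_inner"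
  assumes "norm a \<le> A" "norm b \<le> B"
  shows "inner a b \<le> A * B"
proof -
  have "0 \<le> A" using assms(1) norm_ge_zero[of a] by linarith
  then have "norm a * norm b \<le> A * B" using assms by (intro mult_mono) auto
  then show ?thesis using norm_cauchy_schwarz[of a b] by linarith
qed

lemma norm_diff_le_cball: "a \<in> cball 0 r \<Longrightarrow> b \<in> cball 0 r \<Longrightarrow> norm (a - b) \<le> 2 * r"
  using norm_triangle_ineq4[of a b] by simp

lemma young_inner:
  fixes a b :: "'a::real_inner"
  assumes "c > 0"
  shows "2 * inner a b \<le> c * (norm a)\<^sup>2 + (norm b)\<^sup>2 / c"
proof -
  have "(norm (c *\<^sub>R a - b))\<^sup>2 = c\<^sup>2 * (norm a)\<^sup>2 - 2 * c * inner a b + (norm b)\<^sup>2"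
    using assms by (simp add: norm_diff_square power_mult_distrib)
  then have "0 \<le> (c\<^sup>2 * (norm a)\<^sup>2 - 2 * c * inner a b + (norm b)\<^sup>2) / c"
    using assms by (metis divide_nonneg_pos zero_le_power2)
  also have "\<dots> = c * (norm a)\<^sup>2 - 2 * inner a b + (norm b)\<^sup>2 / c"
    using assms by (simp add: field_simps power2_eq_square)
  finally show ?thesis by linarith
qed

lemma square_sum_le: "(a + b)\<^sup>2 \<le> 2 * a\<^sup>2 + 2 * (b::real)\<^sup>2"
  using zero_le_power2[of "a - b"] by (simp add: power2_eq_square algebra_simps)

lemma le_of_square_le_affine:
  fixes r A B :: real
  assumes "0 \<le> r" "0 \<le> A" "0 \<le> B" "r\<^sup>2 \<le> A * r + B"
  shows "r \<le> A + B + 1"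
proof (cases "r \<le> 1")
  case False
  then have "A * r + B \<le> (A + B) * r" using assms mult_left_mono[of 1 r B] by (simp add: algebra_simps)
  with assms(4) have "r * r \<le> (A + B) * r" by (simp add: power2_eq_square)
  then show ?thesis using False by (simp add: mult_le_cancel_right)
qed (use assms in linarith)

lemma le_of_le_add_small_multiple:
  fixes X Y Z :: real
  assumes "\<And>t. 0 < t \<Longrightarrow> t < 1 \<Longrightarrow> Y \<le> X + t * Z"
  shows "Y \<le> X"
proof -
  have "((\<lambda>t. X + t * Z) \<longlongrightarrow> X + 0 * Z) (at_right 0)"
    by (intro tendsto_intros)
  moreover have "eventually (\<lambda>t. Y \<le> X + t * Z) (at_right (0::real))"
    using eventually_at_right_real[of 0 1] by (rule eventually_mono) (auto intro: assms)
  ultimately show ?thesis using tendsto_lowerbound by fastforce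
qed

lemma has_derivative_inner_le_of_quotient_le:
  fixes F :: "'a::real_inner \<Rightarrow> real"
  assumes der: "(F has_derivative (\<lambda>h. inner a h)) (at u)"
    and le: "\<And>t. 0 < t \<Longrightarrow> t < 1 \<Longrightarrow> (F (u + t *\<^sub>R w) - F u) / t \<le> K"
  shows "inner a w \<le> K"
proof -
  have "((\<lambda>t::real. u + t *\<^sub>R w) has_derivative (\<lambda>t. t *\<^sub>R w)) (at 0)"
    by (auto intro!: derivative_eq_intros)
  from has_derivative_compose[OF this, of F "\<lambda>h. inner a h"] der
  have "((\<lambda>t::real. F (u + t *\<^sub>R w)) has_derivative (\<lambda>t. inner a (t *\<^sub>R w))) (at 0)"
    by simp
  moreover have "(\<lambda>t. inner a (t *\<^sub>R w)) = (*) (inner a w)" by (auto simp: fun_eq_iff)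
  ultimately have "((\<lambda>t::real. F (u + t *\<^sub>R w)) has_field_derivative (inner a w)) (at 0)"
    unfolding has_field_derivative_def by simp
  then have "((\<lambda>t. (F (u + t *\<^sub>R w) - F u) / t) \<longlongrightarrow> inner a w) (at 0)"
    unfolding has_field_derivative_iff by simp
  then have "((\<lambda>t. (F (u + t *\<^sub>R w) - F u) / t) \<longlongrightarrow> inner a w) (at_right 0)"
    by (auto intro: tendsto_mono at_le)
  moreover have "eventually (\<lambda>t. (F (u + t *\<^sub>R w) - F u) / t \<le> K) (at_right (0::real))"
    using eventually_at_right_real[of 0 1] by (rule eventually_mono) (auto intro: le)
  ultimately show ?thesis using tendsto_upperbound by fastforce
qed

lemma convex_on_gradient_ineq:
  fixes F :: "'a::real_inner \<Rightarrow> real"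
  assumes cv: "convex_on S F" and der: "(F has_derivative (\<lambda>h. inner a h)) (at u)"
    and u: "u \<in> S" and u': "u' \<in> S"
  shows "F u + inner a (u' - u) \<le> F u'"
proof -
  have "inner a (u' - u) \<le> F u' - F u"
  proof (rule has_derivative_inner_le_of_quotient_le[OF der])
    fix t :: real assume t: "0 < t" "t < 1"
    have "F ((1 - t) *\<^sub>R u + t *\<^sub>R u') \<le> (1 - t) * F u + t * F u'"
      using convex_onD[OF cv] t u u' by auto
    moreover have "u + t *\<^sub>R (u' - u) = (1 - t) *\<^sub>R u + t *\<^sub>R u'"
      by (simp add: algebra_simps)
    ultimately have "F (u + t *\<^sub>R (u' - u)) - F u \<le> t * (F u' - F u)"
      by (simp add: algebra_simps)
    then show "(F (u + t *\<^sub>R (u' - u)) - F u) / t \<le> F u' - F u"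
      using t by (simp add: divide_le_eq mult.commute)
  qed
  then show ?thesis by simp
qed

lemma concave_on_gradient_ineq:
  fixes F :: "'a::real_inner \<Rightarrow> real"
  assumes cv: "concave_on S F" and der: "(F has_derivative (\<lambda>h. inner a h)) (at u)"
    and u: "u \<in> S" and u': "u' \<in> S"
  shows "F u' \<le> F u + inner a (u' - u)"
proof -
  have "convex_on S (\<lambda>x. - F x)" using cv by (simp add: concave_on_def)
  moreover have "((\<lambda>x. - F x) has_derivative (\<lambda>h. inner (- a) h)) (at u)"
    using has_derivative_minus[OF der] by simp
  ultimately show ?thesis
    using convex_on_gradient_ineq[of S "\<lambda>x. - F x" "- a" u u'] u u' by (simp add: inner_minus_left)
qed

lemma contraction_tendsto_zero:
  fixes a b :: "nat \<Rightarrow> real"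
  assumes nonneg: "\<And>n. 0 \<le> a n" and step: "\<And>n. a (Suc n) \<le> q * a n + b n"
    and q: "0 \<le> q" "q < 1" and b: "b \<longlonglongrightarrow> 0"
  shows "a \<longlonglongrightarrow> 0"
proof (rule LIMSEQ_I)
  fix r :: real assume r: "0 < r"
  obtain N0 where N0: "\<And>n. n \<ge> N0 \<Longrightarrow> norm (b n - 0) < r * (1 - q) / 2"
    using LIMSEQ_D[OF b, of "r * (1 - q) / 2"] r q by auto
  have tail: "a (N0 + k) \<le> q ^ k * a N0 + r / 2" for k
  proof (induction k)
    case (Suc k)
    have "a (N0 + Suc k) \<le> q * a (N0 + k) + b (N0 + k)" using step[of "N0 + k"] by simp
    also have "\<dots> \<le> q * (q ^ k * a N0 + r / 2) + r * (1 - q) / 2"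
      using Suc q N0[of "N0 + k"] by (intro add_mono mult_left_mono) auto
    also have "\<dots> = q ^ Suc k * a N0 + r / 2" by (simp add: field_simps)
    finally show ?case .
  qed (use r in simp)
  have "(\<lambda>k. q ^ k * a N0) \<longlonglongrightarrow> 0"
    using LIMSEQ_power_zero[of q] q by (intro tendsto_mult_left_zero) auto
  moreover have "r / 2 > 0" using r by simp
  ultimately obtain K where K: "\<And>k. k \<ge> K \<Longrightarrow> norm (q ^ k * a N0 - 0) < r / 2"
    using LIMSEQ_D by blast
  have "norm (a n - 0) < r" if n: "n \<ge> N0 + K" for n
  proof -
    have "a n \<le> q ^ (n - N0) * a N0 + r / 2" using tail[of "n - N0"] n by simp
    also have "\<dots> < r"
    proof -
      have "K \<le> n - N0" using n by simp
      then have "norm (q ^ (n - N0) * a N0 - 0) < r / 2" by (rule K)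
      then show ?thesis by simp
    qed
    finally show ?thesis using nonneg[of n] by simp
  qed
  then show "\<exists>no. \<forall>n\<ge>no. norm (a n - 0) < r" by blast
qed

lemma summable_of_sum_from_1_le:
  fixes f :: "nat \<Rightarrow> real"
  assumes nonneg: "\<And>n. f n \<ge> 0" and bound: "\<And>N. (\<Sum>i\<in>{1..N}. f i) \<le> B"
  shows "summable f"
proof (rule summableI_nonneg_bounded[where x = "f 0 + B"])
  fix n
  have "(\<Sum>i<n. f i) \<le> (\<Sum>i\<in>{0..n}. f i)" by (rule sum_mono2) (auto simp: nonneg)
  also have "\<dots> = f 0 + (\<Sum>i\<in>{1..n}. f i)" by (simp add: sum.atLeast_Suc_atMost)
  finally show "(\<Sum>i<n. f i) \<le> f 0 + B" using bound[of n] by simp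
qed (rule nonneg)

section \<open>Closed proper convex extended-real functions\<close>

lemma proper_fun_real_of_ereal:
  assumes "proper_fun h" "h u < \<infinity>"
  shows "ereal (real_of_ereal (h u)) = h u"
  using assms by (cases "h u") (auto simp: proper_fun_def)

lemma closed_fun_le_limit:
  fixes h :: "'a::real_normed_vector \<Rightarrow> ereal"
  assumes "closed_fun h" "X \<longlonglongrightarrow> l" "\<And>k. h (X k) \<le> ereal (T k)" "T \<longlonglongrightarrow> t"
  shows "h l \<le> ereal t"
proof -
  have lim: "(\<lambda>k. (X k, T k)) \<longlonglongrightarrow> (l, t)" using assms(2,4) by (rule tendsto_Pair)
  have "\<And>k. (X k, T k) \<in> eepigraph h" using assms(3) by (simp add: eepigraph_def)
  with assms(1) have "(l, t) \<in> eepigraph h"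
    unfolding closed_fun_def by (rule closed_sequentially[OF _ _ lim])
  then show ?thesis by (simp add: eepigraph_def)
qed

lemma convex_fun_le_combination:
  fixes h :: "'a::real_normed_vector \<Rightarrow> ereal"
  assumes "convex_fun h" "h u \<le> ereal a" "h v \<le> ereal b" "0 \<le> t" "t \<le> 1"
  shows "h ((1 - t) *\<^sub>R u + t *\<^sub>R v) \<le> ereal ((1 - t) * a + t * b)"
proof -
  have "(u, a) \<in> eepigraph h" "(v, b) \<in> eepigraph h" using assms by (auto simp: eepigraph_def)
  then have "(1 - t) *\<^sub>R (u, a) + t *\<^sub>R (v, b) \<in> eepigraph h"
    using assms(1,4,5) unfolding convex_fun_def by (intro convexD) auto
  then show ?thesis by (simp add: eepigraph_def)
qed

lemma proper_closed_convex_affine_minorant: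
  fixes h :: "'a::euclidean_space \<Rightarrow> ereal"
  assumes "proper_closed_convex h"
  obtains a c where "\<And>x. ereal (inner a x + c) \<le> h x"
proof -
  have pf: "proper_fun h" and cl: "closed_fun h" and cv: "convex_fun h"
    using assms by (auto simp: proper_closed_convex_def)
  obtain x0 where "h x0 < \<infinity>" using pf by (auto simp: proper_fun_def)
  then obtain h0 where hx0: "h x0 = ereal h0" using pf by (cases "h x0") (auto simp: proper_fun_def)
  then have "(x0, h0 - 1) \<notin> eepigraph h" by (simp add: eepigraph_def)
  then obtain A b where A: "inner A (x0, h0 - 1) < b" and Ab: "\<forall>p\<in>eepigraph h. b < inner A p"
    using separating_hyperplane_closed_point[of "eepigraph h" "(x0, h0 - 1)"] cl cv
    unfolding closed_fun_def convex_fun_def by blast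
  obtain a1 s where As: "A = (a1, s)" by (cases A)
  have "(x0, h0) \<in> eepigraph h" using hx0 by (simp add: eepigraph_def)
  then have "b < inner a1 x0 + s * h0" using Ab As by (auto simp: inner_Pair)
  moreover have "inner a1 x0 + s * (h0 - 1) < b" using A As by (simp add: inner_Pair)
  ultimately have s: "s > 0" by (simp add: algebra_simps)
  have "ereal (inner (- (1/s) *\<^sub>R a1) x + b / s) \<le> h x" for x
  proof (cases "h x")
    case (real r)
    then have "(x, r) \<in> eepigraph h" by (simp add: eepigraph_def)
    then have "b < inner a1 x + s * r" using Ab As by (auto simp: inner_Pair)
    then have "b / s - inner a1 x / s < r" using s by (simp add: field_simps)
    then show ?thesis using real by (simp add: inner_minus_left)
  next
    case MInf then show ?thesis using pf by (simp add: proper_fun_def)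
  qed simp
  then show ?thesis using that by blast
qed

lemma eepigraph_fenchel_conj:
  fixes f :: "'a::real_inner \<Rightarrow> ereal"
  assumes nm: "\<forall>x. f x \<noteq> - \<infinity>"
  shows "eepigraph (fenchel_conj f)
           = (\<Inter>u\<in>{u. f u \<noteq> \<infinity>}. {p. inner (u, -1::real) p \<le> real_of_ereal (f u)})"
proof (intro set_eqI)
  fix p :: "'a \<times> real"
  obtain y t where p: "p = (y, t)" by (cases p)
  have "ereal (inner y u) - f u \<le> ereal t \<longleftrightarrow>
          (f u \<noteq> \<infinity> \<longrightarrow> inner (u, -1::real) p \<le> real_of_ereal (f u))" for u
  proof (cases "f u")
    case (real c)
    then show ?thesis unfolding p by (auto simp: inner_Pair inner_commute)
  qed (use nm in auto)
  then show "p \<in> eepigraph (fenchel_conj f) \<longleftrightarrow>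
      p \<in> (\<Inter>u\<in>{u. f u \<noteq> \<infinity>}. {p. inner (u, -1::real) p \<le> real_of_ereal (f u)})"
    unfolding eepigraph_def fenchel_conj_def p by (simp add: SUP_le_iff)
qed

lemma proper_closed_convex_fenchel_conj:
  fixes f :: "'a::euclidean_space \<Rightarrow> ereal"
  assumes pcc: "proper_closed_convex f" and ne: "\<exists>y. fenchel_conj f y < \<infinity>"
  shows "proper_closed_convex (fenchel_conj f)"
proof -
  have pf: "proper_fun f" using pcc by (simp add: proper_closed_convex_def)
  then have nm: "\<forall>x. f x \<noteq> - \<infinity>" by (simp add: proper_fun_def)
  obtain x0 where "f x0 < \<infinity>" using pf by (auto simp: proper_fun_def)
  then obtain a0 where a0: "f x0 = ereal a0" using nm by (cases "f x0") auto
  have "fenchel_conj f y \<noteq> - \<infinity>" for y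
  proof -
    have "ereal (inner y x0) - f x0 \<le> fenchel_conj f y"
      unfolding fenchel_conj_def by (rule SUP_upper) simp
    then show ?thesis using a0 by auto
  qed
  then have "proper_fun (fenchel_conj f)" using ne by (simp add: proper_fun_def)
  moreover have "closed (eepigraph (fenchel_conj f))"
    unfolding eepigraph_fenchel_conj[OF nm] by (intro closed_INT ballI closed_halfspace_le)
  moreover have "convex (eepigraph (fenchel_conj f))"
    unfolding eepigraph_fenchel_conj[OF nm] by (intro convex_INT ballI convex_halfspace_le)
  ultimately show ?thesis
    by (simp add: proper_closed_convex_def closed_fun_def convex_fun_def)
qed

section \<open>The proximal map\<close>

abbreviation prox_objective :: "real \<Rightarrow> ('a::real_normed_vector \<Rightarrow> ereal) \<Rightarrow> 'a \<Rightarrow> 'a \<Rightarrow> ereal"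
  where "prox_objective lam h w u \<equiv> h u + ereal ((norm (u - w))\<^sup>2 / (2 * lam))"

lemma affine_plus_quadratic_lower_bound:
  fixes a x w :: "'a::real_inner"
  assumes lam: "lam > 0"
  shows "c + inner a w - lam * (norm a)\<^sup>2 / 2 \<le> inner a x + c + (norm (x - w))\<^sup>2 / (2 * lam)"
proof -
  define r where "r = norm (x - w)"
  have "0 \<le> (r - lam * norm a)\<^sup>2 / (2 * lam)" using lam by simp
  also have "\<dots> = r\<^sup>2 / (2 * lam) - norm a * r + lam * (norm a)\<^sup>2 / 2"
    using lam by (simp add: field_simps power2_eq_square)
  finally have "- lam * (norm a)\<^sup>2 / 2 \<le> - (norm a * r) + r\<^sup>2 / (2 * lam)" by simp
  moreover have "- (norm a * r) \<le> inner a (x - w)"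
    using inner_ge_neg_norm_mult[of a "x - w"] by (simp add: r_def)
  ultimately show ?thesis by (simp add: r_def inner_diff_right)
qed

lemma affine_plus_quadratic_sublevel_bound:
  fixes a x w :: "'a::real_inner"
  assumes lam: "lam > 0" and le: "inner a x + c + (norm (x - w))\<^sup>2 / (2 * lam) \<le> m"
  shows "norm (x - w) \<le> 2 * lam * norm a + 2 * lam * \<bar>m - c - inner a w\<bar> + 1"
proof -
  define r where "r = norm (x - w)"
  have "inner a w - norm a * r \<le> inner a x"
    using inner_ge_neg_norm_mult[of a "x - w"] by (simp add: r_def inner_diff_right)
  with le have "r\<^sup>2 / (2 * lam) \<le> m - c - inner a w + norm a * r" by (simp add: r_def)
  then have "r\<^sup>2 \<le> 2 * lam * (m - c - inner a w + norm a * r)"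
    using lam by (simp add: divide_le_eq mult.commute)
  also have "\<dots> = 2 * lam * (m - c - inner a w) + (2 * lam * norm a) * r"
    by (simp add: algebra_simps)
  also have "\<dots> \<le> (2 * lam * norm a) * r + 2 * lam * \<bar>m - c - inner a w\<bar>"
    using lam by simp
  finally show ?thesis
    unfolding r_def[symmetric] using lam by (intro le_of_square_le_affine) (auto simp: r_def)
qed

lemma prox_objective_bounded_below_coercive:
  fixes h :: "'a::euclidean_space \<Rightarrow> ereal"
  assumes pcc: "proper_closed_convex h" and lam: "lam > 0"
  obtains m0 where "\<And>u. ereal m0 \<le> prox_objective lam h w u"
    and "\<And>m. bounded {u. prox_objective lam h w u \<le> ereal m}"
proof -
  obtain a c where ac: "\<And>x. ereal (inner a x + c) \<le> h x"
    using proper_closed_convex_affine_minorant[OF pcc] by blast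
  have aff_le: "ereal (inner a u + c + (norm (u - w))\<^sup>2 / (2 * lam)) \<le> prox_objective lam h w u" for u
    using add_right_mono[OF ac[of u], of "ereal ((norm (u - w))\<^sup>2 / (2 * lam))"] by simp
  have "ereal (c + inner a w - lam * (norm a)\<^sup>2 / 2) \<le> prox_objective lam h w u" for u
    using aff_le[of u] affine_plus_quadratic_lower_bound[OF lam, of c a w u]
    by (meson ereal_less_eq(3) order_trans)
  moreover have "bounded {u. prox_objective lam h w u \<le> ereal m}" for m
  proof -
    have "norm (u - w) \<le> 2 * lam * norm a + 2 * lam * \<bar>m - c - inner a w\<bar> + 1"
      if "prox_objective lam h w u \<le> ereal m" for u
      using order_trans[OF aff_le that] by (intro affine_plus_quadratic_sublevel_bound[OF lam]) simp
    then have "{u. prox_objective lam h w u \<le> ereal m}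
        \<subseteq> cball w (2 * lam * norm a + 2 * lam * \<bar>m - c - inner a w\<bar> + 1)"
      by (auto simp: dist_norm norm_minus_commute)
    then show ?thesis using bounded_cball bounded_subset by blast
  qed
  ultimately show ?thesis using that by blast
qed

lemma prox_objective_has_minimizer:
  fixes h :: "'a::euclidean_space \<Rightarrow> ereal"
  assumes pcc: "proper_closed_convex h" and lam: "lam > 0"
  obtains u where "\<And>v. prox_objective lam h w u \<le> prox_objective lam h w v"
proof -
  let ?\<phi> = "prox_objective lam h w"
  have pf: "proper_fun h" and cl: "closed_fun h" using pcc by (auto simp: proper_closed_convex_def)
  obtain m0 where m0: "\<And>u. ereal m0 \<le> ?\<phi> u" and sub: "\<And>m. bounded {u. ?\<phi> u \<le> ereal m}"
    using prox_objective_bounded_below_coercive[OF pcc lam] by blast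
  obtain x0 where "h x0 < \<infinity>" using pf by (auto simp: proper_fun_def)
  then have "?\<phi> x0 < \<infinity>" by simp
  then have "(INF u. ?\<phi> u) < \<infinity>" by (meson INF_lower UNIV_I order_le_less_trans)
  moreover have "ereal m0 \<le> (INF u. ?\<phi> u)" using m0 by (rule INF_greatest)
  ultimately obtain m where m: "(INF u. ?\<phi> u) = ereal m" by (cases "INF u. ?\<phi> u") auto
  have "\<exists>u. ?\<phi> u < ereal (m + inverse (real (Suc k)))" for k
  proof -
    have "(INF u. ?\<phi> u) < ereal (m + inverse (real (Suc k)))" using m by simp
    then show ?thesis by (simp add: INF_less_iff)
  qed
  then obtain U where U: "\<And>k. ?\<phi> (U k) < ereal (m + inverse (real (Suc k)))" by metis
  have "U k \<in> {u. ?\<phi> u \<le> ereal (m + 1)}" for k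
    using U[of k] by (auto simp: inverse_le_1_iff intro: order_trans[OF less_imp_le])
  then have "bounded (range U)" using sub by (blast intro: bounded_subset)
  then obtain l \<sigma> where \<sigma>: "strict_mono \<sigma>" and "(U \<circ> \<sigma>) \<longlonglongrightarrow> l"
    using bounded_imp_convergent_subsequence by blast
  then have lim: "(\<lambda>k. U (\<sigma> k)) \<longlonglongrightarrow> l" by (simp add: o_def)
  define T where "T k = m + inverse (real (Suc (\<sigma> k))) - (norm (U (\<sigma> k) - w))\<^sup>2 / (2 * lam)" for k
  have hT: "h (U (\<sigma> k)) \<le> ereal (T k)" for k
    using U[of "\<sigma> k"] unfolding T_def by (cases "h (U (\<sigma> k))") auto
  have "(\<lambda>k. inverse (real (Suc (\<sigma> k)))) \<longlonglongrightarrow> 0"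
    using LIMSEQ_subseq_LIMSEQ[OF LIMSEQ_inverse_real_of_nat \<sigma>] by (simp add: o_def)
  then have "T \<longlonglongrightarrow> m + 0 - (norm (l - w))\<^sup>2 / (2 * lam)"
    unfolding T_def using lam by (intro tendsto_intros lim) auto
  with closed_fun_le_limit[OF cl lim hT]
  have "h l \<le> ereal (m - (norm (l - w))\<^sup>2 / (2 * lam))" by simp
  then have "?\<phi> l \<le> ereal m" by (cases "h l") auto
  then have "?\<phi> l \<le> ?\<phi> v" for v using INF_lower[of v UNIV ?\<phi>] m by auto
  then show ?thesis using that by blast
qed

lemma prox_minimizer_segment_ineq:
  fixes h :: "'a::real_inner \<Rightarrow> ereal"
  assumes cv: "convex_fun h" and lam: "lam > 0"
    and min: "\<And>v. prox_objective lam h w u \<le> prox_objective lam h w v"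
    and Hu: "h u = ereal Hu" and Hv: "h v = ereal Hv" and t: "0 < t" "t < 1"
  shows "Hu \<le> Hv + inner (u - w) (v - u) / lam + t * ((norm (v - u))\<^sup>2 / (2 * lam))"
proof -
  define ut where "ut = (1 - t) *\<^sub>R u + t *\<^sub>R v"
  have "h ut \<le> ereal ((1 - t) * Hu + t * Hv)"
    unfolding ut_def using convex_fun_le_combination[OF cv, of u Hu v Hv t] Hu Hv t by simp
  then have "h ut + ereal ((norm (ut - w))\<^sup>2 / (2 * lam))
      \<le> ereal ((1 - t) * Hu + t * Hv) + ereal ((norm (ut - w))\<^sup>2 / (2 * lam))"
    by (rule add_right_mono)
  from order_trans[OF min[of ut] this] have "Hu + (norm (u - w))\<^sup>2 / (2 * lam)
      \<le> (1 - t) * Hu + t * Hv + (norm (ut - w))\<^sup>2 / (2 * lam)"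
    using Hu by simp
  moreover have "(norm (ut - w))\<^sup>2
      = (norm (u - w))\<^sup>2 + 2 * t * inner (u - w) (v - u) + t\<^sup>2 * (norm (v - u))\<^sup>2"
  proof -
    have e: "ut - w = (u - w) + t *\<^sub>R (v - u)" by (simp add: ut_def algebra_simps)
    show ?thesis unfolding e norm_add_square by (simp add: power_mult_distrib)
  qed
  ultimately have "Hu + (norm (u - w))\<^sup>2 / (2 * lam) \<le> (1 - t) * Hu + t * Hv
      + ((norm (u - w))\<^sup>2 + 2 * t * inner (u - w) (v - u) + t\<^sup>2 * (norm (v - u))\<^sup>2) / (2 * lam)"
    by simp
  also have "\<dots> = (1 - t) * Hu + t * Hv + (norm (u - w))\<^sup>2 / (2 * lam)
      + t * (inner (u - w) (v - u) / lam + t * ((norm (v - u))\<^sup>2 / (2 * lam)))"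
    using lam by (simp add: field_simps power2_eq_square del: inner_diff_left inner_diff_right)
  finally have "t * Hu \<le> t * (Hv + inner (u - w) (v - u) / lam + t * ((norm (v - u))\<^sup>2 / (2 * lam)))"
    by (simp add: algebra_simps)
  then show ?thesis using t by simp
qed

lemma prox_minimizer_subdiff:
  fixes h :: "'a::euclidean_space \<Rightarrow> ereal"
  assumes pcc: "proper_closed_convex h" and lam: "lam > 0"
    and min: "\<And>v. prox_objective lam h w u \<le> prox_objective lam h w v"
  shows "(1 / lam) *\<^sub>R (w - u) \<in> subdiff h u"
proof -
  have pf: "proper_fun h" and cv: "convex_fun h"
    using pcc by (auto simp: proper_closed_convex_def)
  obtain x0 where x0: "h x0 < \<infinity>" using pf by (auto simp: proper_fun_def)
  have "prox_objective lam h w u < \<infinity>"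
    using min[of x0] x0 by (cases "h x0") auto
  then obtain Hu where Hu: "h u = ereal Hu" using pf by (cases "h u") (auto simp: proper_fun_def)
  have "h u + ereal (inner ((1 / lam) *\<^sub>R (w - u)) (v - u)) \<le> h v" for v
  proof (cases "h v")
    case (real Hv)
    have "Hu \<le> Hv + inner (u - w) (v - u) / lam"
      using prox_minimizer_segment_ineq[OF cv lam min Hu real] by (rule le_of_le_add_small_multiple)
    moreover have "inner ((1 / lam) *\<^sub>R (w - u)) (v - u) = - (inner (u - w) (v - u) / lam)"
      by (simp add: inner_diff_left minus_divide_left)
    ultimately show ?thesis using Hu real by simp
  next
    case MInf then show ?thesis using pf by (simp add: proper_fun_def)
  qed simp
  then show ?thesis using Hu by (simp add: subdiff_def)
qed

lemma subdiff_imp_prox_objective_le: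
  fixes h :: "'a::real_inner \<Rightarrow> ereal"
  assumes lam: "lam > 0" and sub: "(1 / lam) *\<^sub>R (w - u) \<in> subdiff h u"
  shows "prox_objective lam h w u + ereal ((norm (v - u))\<^sup>2 / (2 * lam)) \<le> prox_objective lam h w v"
proof -
  obtain Hu where Hu: "h u = ereal Hu" using sub by (cases "h u") (auto simp: subdiff_def)
  have vi: "h u + ereal (inner ((1 / lam) *\<^sub>R (w - u)) (v - u)) \<le> h v"
    using sub by (simp add: subdiff_def)
  show ?thesis
  proof (cases "h v")
    case (real Hv)
    have "inner ((1 / lam) *\<^sub>R (w - u)) (v - u) = - inner (v - u) (u - w) / lam"
      by (simp add: inner_commute inner_diff_left inner_diff_right)
    with vi Hu real have "Hu - inner (v - u) (u - w) / lam \<le> Hv" by simp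
    moreover have "(norm (v - w))\<^sup>2 = (norm (v - u))\<^sup>2 + 2 * inner (v - u) (u - w) + (norm (u - w))\<^sup>2"
      using norm_add_square[of "v - u" "u - w"] by simp
    then have "(norm (v - w))\<^sup>2 / (2 * lam)
        = (norm (v - u))\<^sup>2 / (2 * lam) + inner (v - u) (u - w) / lam + (norm (u - w))\<^sup>2 / (2 * lam)"
      using lam by (simp add: add_divide_distrib)
    ultimately show ?thesis using Hu real by simp
  next
    case MInf then show ?thesis using vi Hu by simp
  qed (use Hu in simp)
qed

lemma prox_minimizer_unique:
  fixes h :: "'a::euclidean_space \<Rightarrow> ereal"
  assumes pcc: "proper_closed_convex h" and lam: "lam > 0"
  shows "\<exists>!u. \<forall>v. prox_objective lam h w u \<le> prox_objective lam h w v"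
proof -
  obtain u where u: "\<And>v. prox_objective lam h w u \<le> prox_objective lam h w v"
    using prox_objective_has_minimizer[OF pcc lam] by blast
  have sub: "(1 / lam) *\<^sub>R (w - u) \<in> subdiff h u" by (rule prox_minimizer_subdiff[OF pcc lam u])
  then obtain Hu where Hu: "h u = ereal Hu" by (cases "h u") (auto simp: subdiff_def)
  have "u' = u" if u': "\<forall>v. prox_objective lam h w u' \<le> prox_objective lam h w v" for u'
  proof -
    have "prox_objective lam h w u + ereal ((norm (u' - u))\<^sup>2 / (2 * lam)) \<le> prox_objective lam h w u'"
      by (rule subdiff_imp_prox_objective_le[OF lam sub])
    also have "\<dots> \<le> prox_objective lam h w u" using u' by blast
    finally have "(norm (u' - u))\<^sup>2 / (2 * lam) \<le> 0" using Hu by simp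
    then show "u' = u" using lam by (simp add: divide_le_0_iff)
  qed
  then show ?thesis using u by blast
qed

lemma Prox_subdiff:
  fixes h :: "'a::euclidean_space \<Rightarrow> ereal"
  assumes pcc: "proper_closed_convex h" and lam: "lam > 0"
  shows "(1 / lam) *\<^sub>R (w - Prox lam h w) \<in> subdiff h (Prox lam h w)"
proof (rule prox_minimizer_subdiff[OF pcc lam])
  show "prox_objective lam h w (Prox lam h w) \<le> prox_objective lam h w v" for v
    using theI'[OF prox_minimizer_unique[OF pcc lam, of w]] unfolding Prox_def by blast
qed

lemma Prox_in_edom:
  fixes h :: "'a::euclidean_space \<Rightarrow> ereal"
  assumes "proper_closed_convex h" "lam > 0"
  shows "Prox lam h w \<in> edom h"
  using Prox_subdiff[OF assms, of w] by (auto simp: subdiff_def edom_def)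

lemma Prox_inner_le:
  fixes h :: "'a::euclidean_space \<Rightarrow> ereal"
  assumes "proper_closed_convex h" "lam > 0" and v: "v \<in> edom h"
  shows "inner (w - Prox lam h w) (v - Prox lam h w)
           \<le> lam * (real_of_ereal (h v) - real_of_ereal (h (Prox lam h w)))"
proof -
  let ?P = "Prox lam h w"
  have sub: "(1 / lam) *\<^sub>R (w - ?P) \<in> subdiff h ?P" by (rule Prox_subdiff[OF assms(1,2)])
  then obtain HP where HP: "h ?P = ereal HP" by (cases "h ?P") (auto simp: subdiff_def)
  obtain Hv where Hv: "h v = ereal Hv"
    using v assms(1) by (cases "h v") (auto simp: edom_def proper_closed_convex_def proper_fun_def)
  have "h ?P + ereal (inner ((1 / lam) *\<^sub>R (w - ?P)) (v - ?P)) \<le> h v"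
    using sub unfolding subdiff_def by blast
  then have "HP + inner (w - ?P) (v - ?P) / lam \<le> Hv" using HP Hv by simp
  then have "inner (w - ?P) (v - ?P) / lam \<le> Hv - HP" by simp
  then show ?thesis using HP Hv assms(2) by (simp add: divide_le_eq mult.commute)
qed

section \<open>The averaging step\<close>

lemma averaging_scalar_ineq:
  fixes \<psi> \<delta> \<phi> Q W X Dd Dq Dw :: real
  assumes \<psi>: "\<psi> > 1" and \<delta>: "0 < \<delta>" "\<delta> \<le> \<phi>" and Dd: "Dd \<ge> 0"
    and nn: "(1 + \<psi>)\<^sup>2 * (Q - 2 * X + W) - 2 * (1 + \<psi>) * \<delta> * \<psi>\<^sup>2 * (Dq - Dw) + \<delta>\<^sup>2 * \<psi>^4 * Dd \<ge> 0"
  shows "- 2 * (Q - X) + 2 * \<delta> * \<psi> * (Dq - Dw - Dd)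
     \<le> (\<psi> / (\<psi> - 1)) * (W - ((\<psi> - 1)\<^sup>2 * Q + 2 * (\<psi> - 1) * X + W) / \<psi>\<^sup>2)
        - (2 * \<psi> - \<psi> ^ 3 * \<phi> / (1 + \<psi>)) * \<delta> * Dd"
proof -
  define N where "N = (1 + \<psi>)\<^sup>2 * (Q - 2 * X + W) - 2 * (1 + \<psi>) * \<delta> * \<psi>\<^sup>2 * (Dq - Dw) + \<delta>\<^sup>2 * \<psi>^4 * Dd"
  have eq: "(\<psi> / (\<psi> - 1)) * (W - ((\<psi> - 1)\<^sup>2 * Q + 2 * (\<psi> - 1) * X + W) / \<psi>\<^sup>2)
        - (2 * \<psi> - \<psi> ^ 3 * \<phi> / (1 + \<psi>)) * \<delta> * Dd - (- 2 * (Q - X) + 2 * \<delta> * \<psi> * (Dq - Dw - Dd))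
        = N / (\<psi> * (1 + \<psi>)) + (\<phi> - \<delta>) * (\<delta> * \<psi> ^ 3 / (1 + \<psi>)) * Dd"
  proof -
    have h1: "inverse \<psi> * \<psi> = 1" "inverse (\<psi> - 1) * (\<psi> - 1) = 1" "inverse (1 + \<psi>) * (1 + \<psi>) = 1"
      using \<psi> by auto
    have h2: "inverse (\<psi>\<^sup>2) = (inverse \<psi>)\<^sup>2" "inverse (\<psi> * (1 + \<psi>)) = inverse \<psi> * inverse (1 + \<psi>)"
      by (simp_all add: power_inverse)
    show ?thesis unfolding N_def divide_inverse h2
      using h1 by algebra
  qed
  have "N / (\<psi> * (1 + \<psi>)) \<ge> 0" using nn \<psi> unfolding N_def by simp
  moreover have "(\<phi> - \<delta>) * (\<delta> * \<psi> ^ 3 / (1 + \<psi>)) * Dd \<ge> 0" using \<psi> \<delta> Dd by simp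
  ultimately show ?thesis using eq by linarith
qed

text \<open>The slack in this inequality is
  |(1 + \<psi>)(q - w) - \<delta> \<psi>^2 (q - p)|^2 / (\<psi> (1 + \<psi>)) + (\<phi> - \<delta>) \<delta> \<psi>^3 |q - p|^2 / (1 + \<psi>).\<close>

lemma averaging_ineq:
  fixes p q s :: "'a::real_inner" and \<psi> \<delta> \<phi> :: real
  assumes \<psi>: "\<psi> > 1" and \<delta>: "0 < \<delta>" "\<delta> \<le> \<phi>"
    and w: "w = ((\<psi> - 1) / \<psi>) *\<^sub>R p + (1 / \<psi>) *\<^sub>R s"
    and w': "w' = ((\<psi> - 1) / \<psi>) *\<^sub>R q + (1 / \<psi>) *\<^sub>R w"
  shows "2 * inner (q - w) (- q) + 2 * \<delta> * inner (p - s) (q - p)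
     \<le> (\<psi> / (\<psi> - 1)) * ((norm w)\<^sup>2 - (norm w')\<^sup>2) - (2 * \<psi> - \<psi> ^ 3 * \<phi> / (1 + \<psi>)) * \<delta> * (norm (q - p))\<^sup>2"
proof -
  define d where "d = q - p"
  have p: "p = q - d" by (simp add: d_def)
  have ps: "p - s = \<psi> *\<^sub>R (q - w - d)"
  proof -
    have "\<psi> *\<^sub>R w = (\<psi> - 1) *\<^sub>R p + s" using \<psi> unfolding w by (simp add: scaleR_add_right)
    then have "s = \<psi> *\<^sub>R w - (\<psi> - 1) *\<^sub>R p" by simp
    then have "p - s = \<psi> *\<^sub>R (p - w)" by (simp add: algebra_simps)
    then show ?thesis by (simp add: p algebra_simps)
  qed
  have w'2: "w' = (1 / \<psi>) *\<^sub>R ((\<psi> - 1) *\<^sub>R q + w)"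
    unfolding w' by (simp add: scaleR_add_right)
  define Q where "Q = inner q q"
  define W where "W = inner w w"
  define X where "X = inner q w"
  define Dd where "Dd = inner d d"
  define Dq where "Dq = inner d q"
  define Dw where "Dw = inner d w"
  have e1: "inner (q - w) (- q) = - (Q - X)"
    unfolding Q_def X_def by (simp add: inner_diff_left inner_diff_right inner_commute)
  have e2: "inner (p - s) (q - p) = \<psi> * (Dq - Dw - Dd)"
    unfolding ps d_def[symmetric] Dq_def Dw_def Dd_def
    by (simp add: inner_diff_left inner_diff_right inner_commute)
  have e3: "(norm w')\<^sup>2 = ((\<psi> - 1)\<^sup>2 * Q + 2 * (\<psi> - 1) * X + W) / \<psi>\<^sup>2"
  proof -
    have a: "(norm w')\<^sup>2 = (norm ((\<psi> - 1) *\<^sub>R q + w))\<^sup>2 / \<psi>\<^sup>2"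
      unfolding w'2 by (simp add: power_mult_distrib power_divide)
    have b: "(norm ((\<psi> - 1) *\<^sub>R q + w))\<^sup>2 = (\<psi> - 1)\<^sup>2 * Q + 2 * (\<psi> - 1) * X + W"
      unfolding norm_add_square Q_def X_def W_def by (simp add: power_mult_distrib power2_norm_eq_inner)
    show ?thesis unfolding a b ..
  qed
  have e4: "(norm w)\<^sup>2 = W" unfolding W_def by (simp add: power2_norm_eq_inner)
  have e5: "(norm (q - p))\<^sup>2 = Dd" unfolding Dd_def d_def by (simp add: power2_norm_eq_inner)
  have nn0: "0 \<le> (norm ((1 + \<psi>) *\<^sub>R (q - w) - (\<delta> * \<psi>\<^sup>2) *\<^sub>R d))\<^sup>2" by simp
  also have "\<dots> = (1 + \<psi>)\<^sup>2 * (Q - 2 * X + W) - 2 * (1 + \<psi>) * \<delta> * \<psi>\<^sup>2 * (Dq - Dw) + \<delta>\<^sup>2 * \<psi>^4 * Dd"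
    unfolding power2_norm_eq_inner Q_def X_def W_def Dq_def Dw_def Dd_def
    by (simp add: inner_diff_left inner_diff_right inner_commute power2_eq_square power4_eq_xxxx algebra_simps)
  finally have nn: "0 \<le> (1 + \<psi>)\<^sup>2 * (Q - 2 * X + W) - 2 * (1 + \<psi>) * \<delta> * \<psi>\<^sup>2 * (Dq - Dw) + \<delta>\<^sup>2 * \<psi>^4 * Dd" .
  have Dd0: "Dd \<ge> 0" unfolding Dd_def by simp
  show ?thesis
    unfolding e1 e2 e3 e4 e5
    using averaging_scalar_ineq[OF \<psi> \<delta> Dd0 nn] by (simp add: algebra_simps)
qed

section \<open>PDAc-L: basic properties of the iterates\<close>

locale pdacl =
  fixes f :: "'b::euclidean_space \<Rightarrow> ereal"
    and g :: "'a::euclidean_space \<Rightarrow> ereal"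
    and \<Phi> :: "'a \<Rightarrow> 'b \<Rightarrow> real"
    and gx :: "'a \<Rightarrow> 'b \<Rightarrow> 'a" and gy :: "'a \<Rightarrow> 'b \<Rightarrow> 'b"
    and \<psi> \<xi> \<phi> \<tau>max \<nu> \<mu> \<eta> \<beta> :: real and M :: nat
    and x :: "nat \<Rightarrow> 'a" and y :: "nat \<Rightarrow> 'b" and z :: "nat \<Rightarrow> 'a"
    and \<tau> \<delta> :: "nat \<Rightarrow> real"
  assumes f: "proper_closed_convex f"
    and g: "proper_closed_convex g"
    and saddle_set_nonempty: "saddle_set g (fenchel_conj f) gx gy \<noteq> {}"
    and \<Phi>_x: "\<forall>v \<in> edom (fenchel_conj f).
                 convex_on (edom g) (\<lambda>u. \<Phi> u v) \<and>
                 (\<forall>u \<in> edom g. ((\<lambda>u'. \<Phi> u' v) has_derivative (\<lambda>h. inner (gx u v) h)) (at u))"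
    and \<Phi>_y: "\<forall>u \<in> edom g.
                 concave_on (edom (fenchel_conj f)) (\<lambda>v. \<Phi> u v) \<and>
                 (\<forall>v \<in> edom (fenchel_conj f).
                    ((\<lambda>v'. \<Phi> u v') has_derivative (\<lambda>h. inner (gy u v) h)) (at v))"
    and lipschitz: "\<forall>X Y. bounded (X :: 'a set) \<longrightarrow> bounded (Y :: 'b set) \<longrightarrow>
                   (\<exists>Lyy Lxx Lxy. Lyy \<ge> 0 \<and> Lxx \<ge> 0 \<and> Lxy > 0 \<and>
                     (\<forall>u \<in> X \<inter> edom g. \<forall>u' \<in> X \<inter> edom g.
                      \<forall>v \<in> Y \<inter> edom (fenchel_conj f). \<forall>v' \<in> Y \<inter> edom (fenchel_conj f).
                        norm (gy u v - gy u v') \<le> Lyy * norm (v - v') \<and>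
                        norm (gx u v - gx u' v') \<le> Lxx * norm (u - u') + Lxy * norm (v - v')))"
    and \<psi>: "1 < \<psi>" and \<xi>: "\<xi> > 0" and \<phi>: "\<phi> > 1"
    and \<omega>: "2 * \<psi> - \<xi> - \<psi> ^ 3 * \<phi> / (1 + \<psi>) > 0"
    and \<tau>max: "\<tau>max > 0"
    and \<nu>: "0 < \<nu>" "\<nu> < 1" and \<mu>: "0 < \<mu>" "\<mu> < 1" and \<eta>: "0 \<le> \<eta>" "\<eta> < 1"
    and M: "M \<ge> 1" and \<beta>: "\<beta> > 0"
    and x0: "x 0 \<in> edom g" and y0: "y 0 \<in> edom (fenchel_conj f)"
    and \<tau>0: "0 < \<tau> 0" "\<tau> 0 \<le> \<tau>max"
    and gen: "pdacl_seq g (fenchel_conj f) \<Phi> gx gy \<psi> \<xi> \<phi> \<tau>max \<nu> \<mu> \<eta> M \<beta> x y z \<tau> \<delta>"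
begin

abbreviation "fs \<equiv> fenchel_conj f"

definition "G u = real_of_ereal (g u)"
definition "F v = real_of_ereal (fs v)"
definition "L u v = G u + \<Phi> u v - F v"

definition "\<omega> = 2 * \<psi> - \<xi> - \<psi> ^ 3 * \<phi> / (1 + \<psi>)"
definition "res n = pdacl_r \<omega> \<beta> (\<delta> (n - 1)) (x n) (x (n - 1)) (y n) (y (n - 1))"
definition "avg_res n = pdacl_c \<eta> M res n"
definition "tau_bar n = min (\<phi> * \<tau> (n - 1)) \<tau>max"
definition "y_trial n t = Prox (\<beta> * t) fs (y (n - 1) + (\<beta> * t) *\<^sub>R gy (x n) (y (n - 1)))"

lemma \<omega>_pos: "\<omega> > 0"
  using \<omega> by (simp add: \<omega>_def)

lemma pdacl_seq_step:
  assumes "n \<ge> 1"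
  shows z_step: "z n = ((\<psi> - 1) / \<psi>) *\<^sub>R x (n - 1) + (1 / \<psi>) *\<^sub>R z (n - 1)"
    and x_step: "x n = Prox (\<tau> (n - 1)) g (z n - \<tau> (n - 1) *\<^sub>R gx (x (n - 1)) (y (n - 1)))"
    and line_search: "\<exists>i. \<tau> n = tau_bar n * \<mu> ^ i \<and> y n = y_trial n (\<tau> n) \<and>
            pdacl_test \<Phi> gx gy \<xi> \<omega> \<nu> \<eta> \<beta> M x y \<tau> \<delta> n (\<tau> n) (y n) \<and>
            (\<forall>j<i. \<not> pdacl_test \<Phi> gx gy \<xi> \<omega> \<nu> \<eta> \<beta> M x y \<tau> \<delta> n
                      (tau_bar n * \<mu> ^ j) (y_trial n (tau_bar n * \<mu> ^ j)))"
    and delta_step: "\<delta> n = \<tau> n / \<tau> (n - 1)"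
proof -
  note step = gen[unfolded pdacl_seq_def Let_def \<omega>_def[symmetric],
      THEN conjunct2, THEN conjunct2, rule_format, OF assms]
  show "z n = ((\<psi> - 1) / \<psi>) *\<^sub>R x (n - 1) + (1 / \<psi>) *\<^sub>R z (n - 1)"
    and "x n = Prox (\<tau> (n - 1)) g (z n - \<tau> (n - 1) *\<^sub>R gx (x (n - 1)) (y (n - 1)))"
    and "\<delta> n = \<tau> n / \<tau> (n - 1)"
    using step by blast+
  show "\<exists>i. \<tau> n = tau_bar n * \<mu> ^ i \<and> y n = y_trial n (\<tau> n) \<and>
            pdacl_test \<Phi> gx gy \<xi> \<omega> \<nu> \<eta> \<beta> M x y \<tau> \<delta> n (\<tau> n) (y n) \<and>
            (\<forall>j<i. \<not> pdacl_test \<Phi> gx gy \<xi> \<omega> \<nu> \<eta> \<beta> M x y \<tau> \<delta> n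
                      (tau_bar n * \<mu> ^ j) (y_trial n (tau_bar n * \<mu> ^ j)))"
    using step unfolding tau_bar_def y_trial_def by blast
qed

lemma z_0: "z 0 = x 0" and delta_0: "\<delta> 0 = 1"
  using gen unfolding pdacl_seq_def Let_def by blast+

lemma tau_pos_le_max: "0 < \<tau> n \<and> \<tau> n \<le> \<tau>max"
proof (induction n)
  case (Suc n)
  obtain i where i: "\<tau> (Suc n) = tau_bar (Suc n) * \<mu> ^ i"
    using line_search[of "Suc n"] by auto
  have "0 < tau_bar (Suc n)" "tau_bar (Suc n) \<le> \<tau>max"
    using Suc \<phi> \<tau>max by (auto simp: tau_bar_def)
  moreover have "0 < \<mu> ^ i" "\<mu> ^ i \<le> 1" using \<mu> by (auto simp: power_le_one)
  ultimately show ?case unfolding i by (simp add: mult_le_one order_trans[OF mult_left_le])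
qed (use \<tau>0 in simp)

lemma tau_pos: "0 < \<tau> n" and tau_le_max: "\<tau> n \<le> \<tau>max"
  using tau_pos_le_max by auto

lemma tau_le_phi: assumes "n \<ge> 1" shows "\<tau> n \<le> \<phi> * \<tau> (n - 1)"
proof -
  obtain i where i: "\<tau> n = tau_bar n * \<mu> ^ i" using line_search[OF assms] by auto
  have "tau_bar n \<le> \<phi> * \<tau> (n - 1)" "0 < tau_bar n"
    using tau_pos[of "n - 1"] \<phi> \<tau>max by (auto simp: tau_bar_def)
  moreover have "\<mu> ^ i \<le> 1" using \<mu> by (simp add: power_le_one)
  ultimately show ?thesis unfolding i by (meson mult_left_le order_trans less_imp_le)
qed

lemma delta_pos: "\<delta> n > 0"
  by (cases "n = 0") (use delta_0 delta_step[of n] tau_pos in auto)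

lemma delta_le_phi: "n \<ge> 1 \<Longrightarrow> \<delta> n \<le> \<phi>"
  using delta_step tau_le_phi tau_pos[of "n - 1"] by (simp add: divide_le_eq)

lemma delta_ge: "\<delta> n \<ge> \<tau> n / \<tau>max"
proof (cases "n = 0")
  case True
  then show ?thesis using delta_0 \<tau>0 \<tau>max by (simp add: divide_le_eq)
next
  case False
  then have "\<delta> n = \<tau> n / \<tau> (n - 1)" by (simp add: delta_step)
  moreover have "\<tau> n / \<tau>max \<le> \<tau> n / \<tau> (n - 1)"
    using tau_pos[of n] tau_pos[of "n - 1"] tau_le_max[of "n - 1"]
    by (intro divide_left_mono) auto
  ultimately show ?thesis by simp
qed

lemma z_1: "z 1 = x 0"
  using z_step[of 1] z_0 \<psi> by (simp add: scaleR_add_left[symmetric] add_divide_distrib[symmetric])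

lemma z_Suc_minus_x: "z (Suc n) - x n = (1 / \<psi>) *\<^sub>R (z n - x n)"
proof -
  have "(\<psi> - 1) / \<psi> = 1 - 1 / \<psi>" using \<psi> by (simp add: field_simps)
  then show ?thesis using z_step[of "Suc n"] by (simp add: scaleR_diff_left scaleR_diff_right)
qed

lemma x_eq_z: "x n = (\<psi> / (\<psi> - 1)) *\<^sub>R z (Suc n) - (1 / (\<psi> - 1)) *\<^sub>R z n"
proof -
  have "(\<psi> / (\<psi> - 1)) *\<^sub>R z (Suc n)
      = ((\<psi> / (\<psi> - 1)) * ((\<psi> - 1) / \<psi>)) *\<^sub>R x n + ((\<psi> / (\<psi> - 1)) * (1 / \<psi>)) *\<^sub>R z n"
    using z_step[of "Suc n"] by (simp add: scaleR_add_right)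
  also have "\<dots> = x n + (1 / (\<psi> - 1)) *\<^sub>R z n" using \<psi> by simp
  finally show ?thesis by simp
qed

lemma proper_closed_convex_fs: "proper_closed_convex fs"
  using proper_closed_convex_fenchel_conj[OF f] saddle_set_nonempty
  by (auto simp: saddle_set_def edom_def)

lemma convex_edom_fs: "convex (edom fs)"
  using saddle_set_nonempty \<Phi>_y by (auto simp: saddle_set_def dest: concave_on_imp_convex)

lemma g_eq_G: "u \<in> edom g \<Longrightarrow> g u = ereal (G u)"
  using g proper_fun_real_of_ereal[of g u]
  by (simp add: G_def edom_def proper_closed_convex_def)

lemma fs_eq_F: "v \<in> edom fs \<Longrightarrow> fs v = ereal (F v)"
  using proper_closed_convex_fs proper_fun_real_of_ereal[of fs v]
  by (simp add: F_def edom_def proper_closed_convex_def)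

lemma x_in_edom: "x n \<in> edom g"
  by (cases "n = 0") (use x0 x_step[of n] Prox_in_edom[OF g tau_pos] in auto)

lemma y_trial_in_edom: "t > 0 \<Longrightarrow> y_trial n t \<in> edom fs"
  unfolding y_trial_def using Prox_in_edom[OF proper_closed_convex_fs] \<beta> by simp

lemma y_eq_y_trial: "n \<ge> 1 \<Longrightarrow> y n = y_trial n (\<tau> n)"
  using line_search[of n] by auto

lemma y_in_edom: "y n \<in> edom fs"
  by (cases "n = 0") (use y0 y_eq_y_trial[of n] y_trial_in_edom[OF tau_pos] in auto)

lemma x_prox_ineq:
  assumes "n \<ge> 1" "v \<in> edom g"
  shows "inner (z n - \<tau> (n - 1) *\<^sub>R gx (x (n - 1)) (y (n - 1)) - x n) (v - x n)
           \<le> \<tau> (n - 1) * (G v - G (x n))"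
  using Prox_inner_le[OF g tau_pos assms(2)] x_step[OF assms(1)] unfolding G_def by simp

lemma y_trial_prox_ineq:
  assumes "t > 0" "v \<in> edom fs"
  shows "inner (y (n - 1) + (\<beta> * t) *\<^sub>R gy (x n) (y (n - 1)) - y_trial n t) (v - y_trial n t)
           \<le> (\<beta> * t) * (F v - F (y_trial n t))"
  using Prox_inner_le[OF proper_closed_convex_fs _ assms(2), of "\<beta> * t"] assms(1) \<beta>
  unfolding F_def y_trial_def by simp

lemma y_prox_ineq:
  assumes "n \<ge> 1" "v \<in> edom fs"
  shows "inner (y (n - 1) + (\<beta> * \<tau> n) *\<^sub>R gy (x n) (y (n - 1)) - y n) (v - y n)
           \<le> (\<beta> * \<tau> n) * (F v - F (y n))"
  using y_trial_prox_ineq[OF tau_pos assms(2), of n n] y_eq_y_trial[OF assms(1)] by simp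

lemma \<Phi>_convex_ineq:
  assumes "v \<in> edom fs" "u \<in> edom g" "u' \<in> edom g"
  shows "\<Phi> u v + inner (gx u v) (u' - u) \<le> \<Phi> u' v"
  using \<Phi>_x assms by (intro convex_on_gradient_ineq[of "edom g" "\<lambda>u. \<Phi> u v"]) auto

lemma \<Phi>_concave_ineq:
  assumes "u \<in> edom g" "v \<in> edom fs" "v' \<in> edom fs"
  shows "\<Phi> u v' \<le> \<Phi> u v + inner (gy u v) (v' - v)"
  using \<Phi>_y assms by (intro concave_on_gradient_ineq[of "edom fs" "\<lambda>v. \<Phi> u v"]) auto

lemma saddle_setD:
  assumes "(xs, ys) \<in> saddle_set g fs gx gy"
  shows "xs \<in> edom g" "ys \<in> edom fs"
    and "v \<in> edom g \<Longrightarrow> G xs + inner (- gx xs ys) (v - xs) \<le> G v"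
    and "w \<in> edom fs \<Longrightarrow> F ys + inner (gy xs ys) (w - ys) \<le> F w"
proof -
  have s: "xs \<in> edom g" "ys \<in> edom fs" "- gx xs ys \<in> subdiff g xs" "gy xs ys \<in> subdiff fs ys"
    using assms by (auto simp: saddle_set_def)
  then show "xs \<in> edom g" "ys \<in> edom fs" by auto
  show "G xs + inner (- gx xs ys) (v - xs) \<le> G v" if "v \<in> edom g"
  proof -
    have "g xs + ereal (inner (- gx xs ys) (v - xs)) \<le> g v"
      using s(3) unfolding subdiff_def by blast
    then show ?thesis using g_eq_G[OF s(1)] g_eq_G[OF that] by simp
  qed
  show "F ys + inner (gy xs ys) (w - ys) \<le> F w" if "w \<in> edom fs"
  proof -
    have "fs ys + ereal (inner (gy xs ys) (w - ys)) \<le> fs w"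
      using s(4) unfolding subdiff_def by blast
    then show ?thesis using fs_eq_F[OF s(2)] fs_eq_F[OF that] by simp
  qed
qed

lemma saddle_setI:
  assumes "xs \<in> edom g" "ys \<in> edom fs"
    and "\<And>v. v \<in> edom g \<Longrightarrow> G xs + inner (- gx xs ys) (v - xs) \<le> G v"
    and "\<And>w. w \<in> edom fs \<Longrightarrow> F ys + inner (gy xs ys) (w - ys) \<le> F w"
  shows "(xs, ys) \<in> saddle_set g fs gx gy"
proof -
  have "g xs + ereal (inner (- gx xs ys) (v - xs)) \<le> g v" for v
    using assms(3)[of v] g_eq_G[OF assms(1)] g_eq_G[of v] by (cases "v \<in> edom g") (auto simp: edom_def)
  moreover have "fs ys + ereal (inner (gy xs ys) (w - ys)) \<le> fs w" for w
    using assms(4)[of w] fs_eq_F[OF assms(2)] fs_eq_F[of w] by (cases "w \<in> edom fs") (auto simp: edom_def)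
  ultimately show ?thesis using assms(1,2) g_eq_G[OF assms(1)] fs_eq_F[OF assms(2)]
    by (simp add: saddle_set_def subdiff_def)
qed

lemma saddle_point_ineq:
  assumes "(xs, ys) \<in> saddle_set g fs gx gy" "u \<in> edom g" "v \<in> edom fs"
  shows "L xs v \<le> L u ys"
proof -
  have d: "xs \<in> edom g" "ys \<in> edom fs" using saddle_setD(1,2)[OF assms(1)] .
  show ?thesis
    using saddle_setD(3)[OF assms(1,2)] saddle_setD(4)[OF assms(1,3)]
      \<Phi>_convex_ineq[OF d(2,1) assms(2)] \<Phi>_concave_ineq[OF d assms(3)]
    by (simp add: L_def inner_minus_left)
qed

section \<open>The energy inequality\<close>

definition "energy xx yy n = (\<psi> / (\<psi> - 1)) * (norm (z (n + 1) - xx))\<^sup>2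
   + (1 / \<beta>) * (norm (y (n - 1) - yy))\<^sup>2 + \<omega> * \<delta> (n - 1) * (norm (x n - x (n - 1)))\<^sup>2"

lemma res_eq: "res n = \<omega> * \<delta> (n - 1) * (norm (x n - x (n - 1)))\<^sup>2 + (1 / \<beta>) * (norm (y n - y (n - 1)))\<^sup>2"
  unfolding res_def pdacl_r_def by simp

lemma res_nonneg: "res n \<ge> 0"
  unfolding res_eq using \<omega>_pos delta_pos[of "n - 1"] \<beta> by simp

lemma avg_res_nonneg: "avg_res n \<ge> 0"
  unfolding avg_res_def pdacl_c_def using res_nonneg \<eta> by (simp add: sum_nonneg)

lemma energy_nonneg: "energy xx yy n \<ge> 0"
  unfolding energy_def using \<psi> \<beta> \<omega>_pos delta_pos[of "n - 1"] by simp

lemma line_search_test_iff: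
  "pdacl_test \<Phi> gx gy \<xi> \<omega> \<nu> \<eta> \<beta> M x y \<tau> \<delta> n t P \<longleftrightarrow>
    t * \<tau> (n - 1) / \<xi> * (norm (gx (x n) P - gx (x (n - 1)) (y (n - 1))))\<^sup>2
     + 2 * t * (\<Phi> (x n) (y (n - 1)) + inner (gy (x n) (y (n - 1))) (P - y (n - 1)) - \<Phi> (x n) P)
     \<le> \<nu> * (\<omega> * \<delta> (n - 1) * (norm (x n - x (n - 1)))\<^sup>2 + (1 / \<beta>) * (norm (P - y (n - 1)))\<^sup>2)
       + (1 - \<nu>) * avg_res n"
proof -
  have "(\<lambda>i. pdacl_r \<omega> \<beta> (\<delta> (i - 1)) (x i) (x (i - 1)) (y i) (y (i - 1))) = res"
    by (simp add: res_def fun_eq_iff)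
  then show ?thesis
    unfolding pdacl_test_def Let_def avg_res_def pdacl_r_def by (simp add: mult.assoc)
qed

lemma line_search_ineq:
  assumes "n \<ge> 1"
  shows "\<tau> n * \<tau> (n - 1) / \<xi> * (norm (gx (x n) (y n) - gx (x (n - 1)) (y (n - 1))))\<^sup>2
     + 2 * \<tau> n * (\<Phi> (x n) (y (n - 1)) + inner (gy (x n) (y (n - 1))) (y n - y (n - 1)) - \<Phi> (x n) (y n))
     \<le> \<nu> * res n + (1 - \<nu>) * avg_res n"
  using line_search[OF assms] unfolding line_search_test_iff res_eq by auto

lemma L_gap_le:
  assumes n: "n \<ge> 1" and xx: "xx \<in> edom g" and yy: "yy \<in> edom fs"
  shows "\<tau> n * (L (x n) yy - L xx (y n))
     \<le> inner (x (Suc n) - z (Suc n)) (xx - x (Suc n)) + \<delta> n * inner (x n - z n) (x (Suc n) - x n)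
       + \<tau> n * inner (gx (x n) (y n) - gx (x (n - 1)) (y (n - 1))) (x n - x (Suc n))
       + (1 / \<beta>) * inner (y n - y (n - 1)) (yy - y n)
       + \<tau> n * (\<Phi> (x n) (y (n - 1)) + inner (gy (x n) (y (n - 1))) (y n - y (n - 1)) - \<Phi> (x n) (y n))"
proof -
  define A0 where "A0 = gx (x (n - 1)) (y (n - 1))"
  define A1 where "A1 = gx (x n) (y n)"
  define B where "B = gy (x n) (y (n - 1))"
  have t1: "\<tau> n = \<delta> n * \<tau> (n - 1)"
    using delta_step[OF n] tau_pos[of "n - 1"] by simp
  have next_x: "- inner (x (Suc n) - z (Suc n)) (xx - x (Suc n)) - \<tau> n * inner A1 (xx - x (Suc n))
      \<le> \<tau> n * (G xx - G (x (Suc n)))"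
    using x_prox_ineq[of "Suc n" xx] xx
    by (simp add: A1_def inner_diff_left inner_diff_right algebra_simps)
  have "- inner (x n - z n) (x (Suc n) - x n) - \<tau> (n - 1) * inner A0 (x (Suc n) - x n)
      \<le> \<tau> (n - 1) * (G (x (Suc n)) - G (x n))"
    using x_prox_ineq[OF n x_in_edom[of "Suc n"]] by (simp add: A0_def inner_diff_left inner_diff_right algebra_simps)
  from mult_left_mono[OF this, of "\<delta> n"]
  have this_x: "- (\<delta> n * inner (x n - z n) (x (Suc n) - x n)) - \<tau> n * inner A0 (x (Suc n) - x n)
      \<le> \<tau> n * (G (x (Suc n)) - G (x n))"
    using delta_pos[of n] unfolding t1 by (simp add: algebra_simps)
  have "- inner (y n - y (n - 1)) (yy - y n) + (\<beta> * \<tau> n) * inner B (yy - y n)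
      \<le> (\<beta> * \<tau> n) * (F yy - F (y n))"
    using y_prox_ineq[OF n yy] by (simp add: B_def inner_diff_left inner_diff_right inner_add_left algebra_simps)
  from mult_left_mono[OF this, of "1 / \<beta>"]
  have this_y: "- ((1 / \<beta>) * inner (y n - y (n - 1)) (yy - y n)) + \<tau> n * inner B (yy - y n)
      \<le> \<tau> n * (F yy - F (y n))"
    using \<beta> by (simp add: algebra_simps)
  have "\<Phi> (x n) (y n) + inner A1 (xx - x n) \<le> \<Phi> xx (y n)"
    using \<Phi>_convex_ineq[OF y_in_edom x_in_edom xx] by (simp add: A1_def)
  from mult_left_mono[OF this, of "\<tau> n"]
  have conv: "\<tau> n * \<Phi> (x n) (y n) + \<tau> n * inner A1 (xx - x n) \<le> \<tau> n * \<Phi> xx (y n)"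
    using tau_pos[of n] by (simp add: algebra_simps)
  have "\<Phi> (x n) yy \<le> \<Phi> (x n) (y (n - 1)) + inner B (yy - y (n - 1))"
    using \<Phi>_concave_ineq[OF x_in_edom y_in_edom yy] by (simp add: B_def)
  from mult_left_mono[OF this, of "\<tau> n"]
  have conc: "\<tau> n * \<Phi> (x n) yy \<le> \<tau> n * \<Phi> (x n) (y (n - 1)) + \<tau> n * inner B (yy - y (n - 1))"
    using tau_pos[of n] by (simp add: algebra_simps)
  have "inner A1 (xx - x (Suc n)) - inner A1 (xx - x n) + inner A0 (x (Suc n) - x n)
      = inner (A1 - A0) (x n - x (Suc n))"
    by (simp add: inner_diff_left inner_diff_right algebra_simps)
  moreover have "inner B (yy - y (n - 1)) - inner B (yy - y n) = inner B (y n - y (n - 1))"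
    by (simp add: inner_diff_right algebra_simps)
  ultimately show ?thesis
    using next_x this_x this_y conv conc unfolding L_def A0_def[symmetric] A1_def[symmetric] B_def[symmetric]
    by (simp add: algebra_simps)
qed

lemma z_averaging_step_ineq:
  assumes n: "n \<ge> 1"
  shows "2 * inner (x (Suc n) - z (Suc n)) (xx - x (Suc n)) + 2 * (\<delta> n * inner (x n - z n) (x (Suc n) - x n))
    \<le> (\<psi> / (\<psi> - 1)) * (norm (z (Suc n) - xx))\<^sup>2 - (\<psi> / (\<psi> - 1)) * (norm (z (Suc (Suc n)) - xx))\<^sup>2
       - (\<omega> * \<delta> n * (norm (x (Suc n) - x n))\<^sup>2 + \<xi> * \<delta> n * (norm (x (Suc n) - x n))\<^sup>2)"
proof -
  have shift: "z (Suc m) - xx = ((\<psi> - 1) / \<psi>) *\<^sub>R (x m - xx) + (1 / \<psi>) *\<^sub>R (z m - xx)" for m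
  proof -
    have "((\<psi> - 1) / \<psi>) *\<^sub>R xx + (1 / \<psi>) *\<^sub>R xx = xx"
      using \<psi> by (simp add: scaleR_add_left[symmetric] add_divide_distrib[symmetric])
    then show ?thesis using z_step[of "Suc m"] by (simp add: algebra_simps)
  qed
  show ?thesis
    using averaging_ineq[OF \<psi> delta_pos delta_le_phi[OF n] shift[of n] shift[of "Suc n"]]
    unfolding \<omega>_def by (simp add: right_diff_distrib algebra_simps)
qed

lemma gradient_cross_term_le:
  assumes n: "n \<ge> 1"
  shows "2 * (\<tau> n * inner (gx (x n) (y n) - gx (x (n - 1)) (y (n - 1))) (x n - x (Suc n)))
    \<le> \<tau> n * \<tau> (n - 1) / \<xi> * (norm (gx (x n) (y n) - gx (x (n - 1)) (y (n - 1))))\<^sup>2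
       + \<xi> * \<delta> n * (norm (x (Suc n) - x n))\<^sup>2"
proof -
  have t1: "\<tau> n = \<delta> n * \<tau> (n - 1)"
    using delta_step[OF n] tau_pos[of "n - 1"] by simp
  have "2 * inner (gx (x n) (y n) - gx (x (n - 1)) (y (n - 1))) (x n - x (Suc n))
      \<le> \<tau> (n - 1) / \<xi> * (norm (gx (x n) (y n) - gx (x (n - 1)) (y (n - 1))))\<^sup>2
        + (norm (x (Suc n) - x n))\<^sup>2 / (\<tau> (n - 1) / \<xi>)"
    using young_inner[of "\<tau> (n - 1) / \<xi>"] tau_pos[of "n - 1"] \<xi> by (simp add: norm_minus_commute)
  from mult_left_mono[OF this, of "\<tau> n"] show ?thesis
    using tau_pos[of n] tau_pos[of "n - 1"] \<xi> unfolding t1 by (simp add: field_simps)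
qed

lemma energy_step:
  assumes n: "n \<ge> 1" and xx: "xx \<in> edom g" and yy: "yy \<in> edom fs"
  shows "2 * \<tau> n * (L (x n) yy - L xx (y n)) + energy xx yy (Suc n) + (1 - \<nu>) * res n
           \<le> energy xx yy n + (1 - \<nu>) * avg_res n"
proof -
  define kp where "kp = \<psi> / (\<psi> - 1)"
  define a6 where "a6 = inner (y n - y (n - 1)) (yy - y n)"
  define T where "T = (norm (gx (x n) (y n) - gx (x (n - 1)) (y (n - 1))))\<^sup>2"
  define D where "D = (norm (x (Suc n) - x n))\<^sup>2"
  define D0 where "D0 = (norm (x n - x (n - 1)))\<^sup>2"
  define E0 where "E0 = (norm (y (n - 1) - yy))\<^sup>2"
  define E1 where "E1 = (norm (y n - yy))\<^sup>2"
  define EY where "EY = (norm (y n - y (n - 1)))\<^sup>2"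
  have "2 * ((1 / \<beta>) * a6) = (1 / \<beta>) * E0 - (1 / \<beta>) * E1 - (1 / \<beta>) * EY"
  proof -
    have "2 * a6 = E0 - E1 - EY"
      using inner_three_points[where a = "y (n - 1)" and b = "y n" and c = yy]
      unfolding a6_def E0_def E1_def EY_def .
    then have "2 * ((1 / \<beta>) * a6) = (1 / \<beta>) * (E0 - E1 - EY)" by simp
    then show ?thesis by (simp only: right_diff_distrib)
  qed
  moreover have "energy xx yy n = kp * (norm (z (Suc n) - xx))\<^sup>2 + (1 / \<beta>) * E0 + \<omega> * \<delta> (n - 1) * D0"
    unfolding energy_def kp_def E0_def D0_def by simp
  moreover have "energy xx yy (Suc n) = kp * (norm (z (Suc (Suc n)) - xx))\<^sup>2 + (1 / \<beta>) * E1 + \<omega> * \<delta> n * D"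
    unfolding energy_def kp_def E1_def D_def by simp
  moreover have "res n = \<omega> * \<delta> (n - 1) * D0 + (1 / \<beta>) * EY"
    unfolding res_eq D0_def EY_def ..
  moreover have "2 * \<tau> n * (L (x n) yy - L xx (y n)) = 2 * (\<tau> n * (L (x n) yy - L xx (y n)))"
    "(1 - \<nu>) * res n = res n - \<nu> * res n"
    by (simp_all add: algebra_simps)
  ultimately show ?thesis
    using L_gap_le[OF n xx yy] z_averaging_step_ineq[OF n, of xx] gradient_cross_term_le[OF n]
      line_search_ineq[OF n]
    unfolding kp_def[symmetric] a6_def[symmetric] T_def[symmetric] D_def[symmetric]
    by (simp add: mult.assoc)
qed

lemma saddle_point_exists:
  obtains xs ys where "(xs, ys) \<in> saddle_set g fs gx gy"
  using saddle_set_nonempty by auto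

lemma energy_decrease:
  assumes s: "(xs, ys) \<in> saddle_set g fs gx gy" and n: "n \<ge> 1"
  shows "energy xs ys (Suc n) + (1 - \<nu>) * res n \<le> energy xs ys n + (1 - \<nu>) * avg_res n"
proof -
  have d: "xs \<in> edom g" "ys \<in> edom fs" using saddle_setD[OF s] by auto
  have "0 \<le> 2 * \<tau> n * (L (x n) ys - L xs (y n))"
    using saddle_point_ineq[OF s x_in_edom y_in_edom, of n n] tau_pos[of n] by simp
  then show ?thesis using energy_step[OF n d] by linarith
qed

lemma avg_res_le_initial_sum:
  assumes "n \<le> M"
  shows "avg_res n \<le> \<eta> * (\<Sum>i\<in>{1..M}. res i)"
proof (cases "n \<le> 1")
  case True
  then show ?thesis using \<eta> res_nonneg by (simp add: avg_res_def pdacl_c_def sum_nonneg)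
next
  case False
  have card: "real (card {1..<n}) \<ge> 1" using False by simp
  have "avg_res n = \<eta> / real (card {1..<n}) * (\<Sum>i\<in>{1..<n}. res i)"
    using False assms by (simp add: avg_res_def pdacl_c_def)
  also have "\<dots> \<le> \<eta> * (\<Sum>i\<in>{1..<n}. res i)"
    using card \<eta> by (intro mult_right_mono sum_nonneg res_nonneg)
      (auto simp: divide_le_eq mult_le_cancel_left1)
  also have "\<dots> \<le> \<eta> * (\<Sum>i\<in>{1..M}. res i)"
    using assms \<eta> by (intro mult_left_mono sum_mono2) (auto simp: res_nonneg)
  finally show ?thesis .
qed

text \<open>For n > M the average runs over the full window of the last M residuals, so every
  residual is counted at most M times in the sum of the averages.\<close>

lemma sum_avg_res_tail_le:
  "(\<Sum>n\<in>{n\<in>{1..N}. M < n}. avg_res n) \<le> \<eta> * (\<Sum>i\<in>{1..N}. res i)"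
proof -
  define A where "A = {n\<in>{1..N}. M < n}"
  define W where "W n = {i\<in>{1..N}. n - M \<le> i \<and> i < n}" for n
  have avg: "avg_res n = (\<eta> / real M) * (\<Sum>i\<in>W n. res i)" if "n \<in> A" for n
  proof -
    have "{max (n - M) 1..<n} = W n" "card {max (n - M) 1..<n} = M" "\<not> n \<le> 1"
      using that M by (auto simp: A_def W_def)
    then show ?thesis unfolding avg_res_def pdacl_c_def by simp
  qed
  have "(\<Sum>n\<in>A. \<Sum>i\<in>W n. res i) = (\<Sum>i\<in>{1..N}. \<Sum>n\<in>{n\<in>A. n - M \<le> i \<and> i < n}. res i)"
    unfolding W_def by (rule sum.swap_restrict) (auto simp: A_def)
  also have "\<dots> \<le> (\<Sum>i\<in>{1..N}. real M * res i)"
  proof (rule sum_mono)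
    fix i
    have "card {n\<in>A. n - M \<le> i \<and> i < n} \<le> card {i<..i + M}"
      by (rule card_mono) auto
    then show "(\<Sum>n\<in>{n\<in>A. n - M \<le> i \<and> i < n}. res i) \<le> real M * res i"
      using res_nonneg[of i] by (simp add: mult_right_mono)
  qed
  finally have "(\<Sum>n\<in>A. \<Sum>i\<in>W n. res i) \<le> real M * (\<Sum>i\<in>{1..N}. res i)"
    by (simp add: sum_distrib_left)
  from mult_left_mono[OF this, of "\<eta> / real M"]
  have "(\<eta> / real M) * (\<Sum>n\<in>A. \<Sum>i\<in>W n. res i) \<le> \<eta> * (\<Sum>i\<in>{1..N}. res i)"
    using \<eta> M by simp
  moreover have "(\<Sum>n\<in>A. avg_res n) = (\<eta> / real M) * (\<Sum>n\<in>A. \<Sum>i\<in>W n. res i)"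
    by (simp add: avg sum_distrib_left)
  ultimately show ?thesis unfolding A_def by simp
qed

lemma sum_avg_res_le:
  "(\<Sum>n\<in>{1..N}. avg_res n) \<le> \<eta> * (\<Sum>i\<in>{1..N}. res i) + real M * \<eta> * (\<Sum>i\<in>{1..M}. res i)"
proof -
  have "(\<Sum>n\<in>{1..N}. avg_res n)
      = (\<Sum>n\<in>{n\<in>{1..N}. n \<le> M}. avg_res n) + (\<Sum>n\<in>{n\<in>{1..N}. M < n}. avg_res n)"
    by (subst sum.union_disjoint[symmetric]) (auto intro: sum.cong)
  moreover have "(\<Sum>n\<in>{n\<in>{1..N}. n \<le> M}. avg_res n) \<le> real M * \<eta> * (\<Sum>i\<in>{1..M}. res i)"
  proof -
    have "(\<Sum>n\<in>{n\<in>{1..N}. n \<le> M}. avg_res n) \<le> (\<Sum>n\<in>{n\<in>{1..N}. n \<le> M}. \<eta> * (\<Sum>i\<in>{1..M}. res i))"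
      by (rule sum_mono, rule avg_res_le_initial_sum) simp
    also have "\<dots> = real (card {n\<in>{1..N}. n \<le> M}) * (\<eta> * (\<Sum>i\<in>{1..M}. res i))"
      by simp
    also have "\<dots> \<le> real M * (\<eta> * (\<Sum>i\<in>{1..M}. res i))"
    proof (rule mult_right_mono)
      have "card {n\<in>{1..N}. n \<le> M} \<le> card {1..M}" by (rule card_mono) auto
      then show "real (card {n\<in>{1..N}. n \<le> M}) \<le> real M" by simp
    qed (use \<eta> in \<open>simp add: sum_nonneg res_nonneg\<close>)
    finally show ?thesis by (simp add: mult.assoc)
  qed
  ultimately show ?thesis using sum_avg_res_tail_le[of N] by linarith
qed

lemma energy_telescope:
  assumes s: "(xs, ys) \<in> saddle_set g fs gx gy"
  shows "energy xs ys (Suc N) + (1 - \<nu>) * (\<Sum>n\<in>{1..N}. res n)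
           \<le> energy xs ys 1 + (1 - \<nu>) * (\<Sum>n\<in>{1..N}. avg_res n)"
proof (induction N)
  case (Suc N)
  then show ?case using energy_decrease[OF s, of "Suc N"] by (simp add: algebra_simps)
qed simp

definition "energy_bound xs ys = energy xs ys 1 + (1 - \<nu>) * (real M * \<eta> * (\<Sum>i\<in>{1..M}. res i))"

lemma energy_res_sum_le:
  assumes s: "(xs, ys) \<in> saddle_set g fs gx gy"
  shows "energy xs ys (Suc N) + (1 - \<nu>) * (1 - \<eta>) * (\<Sum>n\<in>{1..N}. res n) \<le> energy_bound xs ys"
proof -
  have "(1 - \<nu>) * (\<Sum>n\<in>{1..N}. avg_res n)
      \<le> (1 - \<nu>) * (\<eta> * (\<Sum>i\<in>{1..N}. res i) + real M * \<eta> * (\<Sum>i\<in>{1..M}. res i))"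
    using sum_avg_res_le[of N] \<nu> by (intro mult_left_mono) auto
  then show ?thesis using energy_telescope[OF s, of N] unfolding energy_bound_def
    by (simp add: algebra_simps)
qed

lemma energy_le_bound:
  assumes s: "(xs, ys) \<in> saddle_set g fs gx gy" and "k \<ge> 1"
  shows "energy xs ys k \<le> energy_bound xs ys"
proof -
  obtain N where N: "k = Suc N" using \<open>k \<ge> 1\<close> by (cases k) auto
  have "0 \<le> (1 - \<nu>) * (1 - \<eta>) * (\<Sum>n\<in>{1..N}. res n)"
    using \<nu> \<eta> res_nonneg by (intro mult_nonneg_nonneg sum_nonneg) auto
  then show ?thesis using energy_res_sum_le[OF s, of N] unfolding N by linarith
qed

lemma sum_res_le:
  assumes s: "(xs, ys) \<in> saddle_set g fs gx gy"
  shows "(\<Sum>n\<in>{1..N}. res n) \<le> energy_bound xs ys / ((1 - \<nu>) * (1 - \<eta>))"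
proof -
  have "(1 - \<nu>) * (1 - \<eta>) * (\<Sum>n\<in>{1..N}. res n) \<le> energy_bound xs ys"
    using energy_res_sum_le[OF s, of N] energy_nonneg[of xs ys "Suc N"] by linarith
  then show ?thesis using \<nu> \<eta> by (simp add: le_divide_eq mult.commute)
qed

lemma summable_res: "summable res"
proof -
  obtain xs ys where "(xs, ys) \<in> saddle_set g fs gx gy" by (rule saddle_point_exists)
  then show ?thesis by (rule summable_of_sum_from_1_le[OF res_nonneg sum_res_le])
qed

lemma summable_avg_res: "summable avg_res"
proof -
  obtain xs ys where s: "(xs, ys) \<in> saddle_set g fs gx gy" by (rule saddle_point_exists)
  have "(\<Sum>n\<in>{1..N}. avg_res n)
      \<le> \<eta> * (energy_bound xs ys / ((1 - \<nu>) * (1 - \<eta>))) + real M * \<eta> * (\<Sum>i\<in>{1..M}. res i)" for N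
    using sum_avg_res_le[of N] mult_left_mono[OF sum_res_le[OF s, of N] \<eta>(1)] by linarith
  then show ?thesis by (rule summable_of_sum_from_1_le[OF avg_res_nonneg])
qed

lemma res_tendsto_zero: "res \<longlonglongrightarrow> 0"
  using summable_res by (rule summable_LIMSEQ_zero)

lemma avg_res_tendsto_zero: "avg_res \<longlonglongrightarrow> 0"
  using summable_avg_res by (rule summable_LIMSEQ_zero)

lemma energy_bound_components:
  assumes s: "(xs, ys) \<in> saddle_set g fs gx gy" and k: "k \<ge> 1"
  shows "(norm (z (Suc k) - xs))\<^sup>2 \<le> ((\<psi> - 1) / \<psi>) * energy_bound xs ys"
    and "(norm (y (k - 1) - ys))\<^sup>2 \<le> \<beta> * energy_bound xs ys"
proof -
  have Z: "0 \<le> (\<psi> / (\<psi> - 1)) * (norm (z (k + 1) - xs))\<^sup>2"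
    and Y: "0 \<le> (1 / \<beta>) * (norm (y (k - 1) - ys))\<^sup>2"
    and X: "0 \<le> \<omega> * \<delta> (k - 1) * (norm (x k - x (k - 1)))\<^sup>2"
    using \<psi> \<beta> \<omega>_pos delta_pos[of "k - 1"] by auto
  have E: "energy xs ys k \<le> energy_bound xs ys" by (rule energy_le_bound[OF s k])
  have "(\<psi> / (\<psi> - 1)) * (norm (z (Suc k) - xs))\<^sup>2 \<le> energy_bound xs ys"
    using E Y X unfolding energy_def by simp
  from mult_left_mono[OF this, of "(\<psi> - 1) / \<psi>"]
  show "(norm (z (Suc k) - xs))\<^sup>2 \<le> ((\<psi> - 1) / \<psi>) * energy_bound xs ys"
    using \<psi> by simp
  have "(1 / \<beta>) * (norm (y (k - 1) - ys))\<^sup>2 \<le> energy_bound xs ys"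
    using E Z X unfolding energy_def by simp
  then show "(norm (y (k - 1) - ys))\<^sup>2 \<le> \<beta> * energy_bound xs ys"
    using \<beta> by (simp add: divide_le_eq mult.commute)
qed

lemma bounded_y: "bounded (range y)"
proof -
  obtain xs ys where s: "(xs, ys) \<in> saddle_set g fs gx gy" by (rule saddle_point_exists)
  have "y k \<in> cball ys (sqrt (\<beta> * energy_bound xs ys))" for k
    using energy_bound_components(2)[OF s, of "Suc k"]
    by (simp add: dist_norm norm_minus_commute real_le_rsqrt)
  then show ?thesis by (intro bounded_subset[OF bounded_cball]) auto
qed

lemma bounded_z: "bounded (range z)"
proof -
  obtain xs ys where s: "(xs, ys) \<in> saddle_set g fs gx gy" by (rule saddle_point_exists)
  have "z k \<in> cball xs (sqrt (((\<psi> - 1) / \<psi>) * energy_bound xs ys)) \<union> {x 0}" for k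
  proof (cases "k \<le> 1")
    case True
    then have "k = 0 \<or> k = 1" by auto
    then show ?thesis using z_0 z_1 by auto
  next
    case False
    then obtain j where "k = Suc j" "j \<ge> 1" by (cases k) auto
    then show ?thesis using energy_bound_components(1)[OF s, of j]
      by (simp add: dist_norm norm_minus_commute real_le_rsqrt)
  qed
  then have "range z \<subseteq> cball xs (sqrt (((\<psi> - 1) / \<psi>) * energy_bound xs ys)) \<union> {x 0}"
    by blast
  then show ?thesis by (rule bounded_subset[rotated]) simp
qed

lemma bounded_x: "bounded (range x)"
proof -
  obtain B where B: "\<And>n. norm (z n) \<le> B" using bounded_z by (auto simp: bounded_iff)
  have "norm (x n) \<le> (\<psi> / (\<psi> - 1)) * B + (1 / (\<psi> - 1)) * B" for n
  proof -
    have "norm (x n) \<le> (\<psi> / (\<psi> - 1)) * norm (z (Suc n)) + (1 / (\<psi> - 1)) * norm (z n)"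
      using norm_triangle_ineq4[of "(\<psi> / (\<psi> - 1)) *\<^sub>R z (Suc n)" "(1 / (\<psi> - 1)) *\<^sub>R z n"] \<psi>
      unfolding x_eq_z[of n] by simp
    also have "\<dots> \<le> (\<psi> / (\<psi> - 1)) * B + (1 / (\<psi> - 1)) * B"
      using \<psi> B by (intro add_mono mult_left_mono) auto
    finally show ?thesis .
  qed
  then show ?thesis unfolding bounded_iff by blast
qed

section \<open>The step sizes are bounded away from zero\<close>

lemma gradient_lipschitz:
  assumes "bounded X" "bounded Y"
  obtains Lyy Lxx Lxy where "Lyy \<ge> 0" "Lxx \<ge> 0" "Lxy > 0"
    and "\<And>u v v'. u \<in> X \<inter> edom g \<Longrightarrow> v \<in> Y \<inter> edom fs \<Longrightarrow> v' \<in> Y \<inter> edom fs \<Longrightarrow>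
           norm (gy u v - gy u v') \<le> Lyy * norm (v - v')"
    and "\<And>u u' v v'. u \<in> X \<inter> edom g \<Longrightarrow> u' \<in> X \<inter> edom g \<Longrightarrow>
           v \<in> Y \<inter> edom fs \<Longrightarrow> v' \<in> Y \<inter> edom fs \<Longrightarrow>
           norm (gx u v - gx u' v') \<le> Lxx * norm (u - u') + Lxy * norm (v - v')"
proof -
  from lipschitz[rule_format, OF assms] obtain Lyy Lxx Lxy where nonneg: "Lyy \<ge> 0" "Lxx \<ge> 0" "Lxy > 0"
    and L: "\<forall>u \<in> X \<inter> edom g. \<forall>u' \<in> X \<inter> edom g. \<forall>v \<in> Y \<inter> edom fs. \<forall>v' \<in> Y \<inter> edom fs.
              norm (gy u v - gy u v') \<le> Lyy * norm (v - v') \<and>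
              norm (gx u v - gx u' v') \<le> Lxx * norm (u - u') + Lxy * norm (v - v')"
    by (elim exE conjE)
  show ?thesis
  proof (rule that)
    show "norm (gy u v - gy u v') \<le> Lyy * norm (v - v')"
      if "u \<in> X \<inter> edom g" "v \<in> Y \<inter> edom fs" "v' \<in> Y \<inter> edom fs" for u v v'
      using L[rule_format, OF that(1) that(1) that(2,3)] by simp
    show "norm (gx u v - gx u' v') \<le> Lxx * norm (u - u') + Lxy * norm (v - v')"
      if "u \<in> X \<inter> edom g" "u' \<in> X \<inter> edom g" "v \<in> Y \<inter> edom fs" "v' \<in> Y \<inter> edom fs"
      for u u' v v'
      using L[rule_format, OF that] by simp
  qed (use nonneg in auto)
qed

lemma gx_bounded_on_cball:
  assumes u0: "u0 \<in> cball 0 bX \<inter> edom g" and v0: "v0 \<in> cball 0 bY \<inter> edom fs"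
  obtains B where "\<And>u v. u \<in> cball 0 bX \<inter> edom g \<Longrightarrow> v \<in> cball 0 bY \<inter> edom fs \<Longrightarrow>
    norm (gx u v) \<le> B"
proof -
  obtain Lyy Lxx Lxy where L: "Lxx \<ge> 0" "Lxy > 0"
    and Lx: "\<And>u u' v v'. u \<in> cball 0 bX \<inter> edom g \<Longrightarrow> u' \<in> cball 0 bX \<inter> edom g \<Longrightarrow>
           v \<in> cball 0 bY \<inter> edom fs \<Longrightarrow> v' \<in> cball 0 bY \<inter> edom fs \<Longrightarrow>
           norm (gx u v - gx u' v') \<le> Lxx * norm (u - u') + Lxy * norm (v - v')"
    by (rule gradient_lipschitz[of "cball 0 bX" "cball 0 bY"]) auto
  have "norm (gx u v) \<le> norm (gx u0 v0) + Lxx * (2 * bX) + Lxy * (2 * bY)"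
    if u: "u \<in> cball 0 bX \<inter> edom g" and v: "v \<in> cball 0 bY \<inter> edom fs" for u v
  proof -
    have "norm (gx u v - gx u0 v0) \<le> Lxx * norm (u - u0) + Lxy * norm (v - v0)"
      by (rule Lx[OF u u0 v v0])
    also have "\<dots> \<le> Lxx * (2 * bX) + Lxy * (2 * bY)"
      using u v u0 v0 L by (intro add_mono mult_left_mono norm_diff_le_cball) auto
    finally show ?thesis using norm_triangle_sub[of "gx u v" "gx u0 v0"] by linarith
  qed
  then show ?thesis using that by blast
qed

lemma gy_bounded_on_cball:
  assumes u: "u \<in> cball 0 bX \<inter> edom g" and v0: "v0 \<in> cball 0 bY \<inter> edom fs"
  obtains B where "\<And>v. v \<in> cball 0 bY \<inter> edom fs \<Longrightarrow> norm (gy u v) \<le> B"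
proof -
  obtain Lyy Lxx Lxy where L: "Lyy \<ge> 0"
    and Ly: "\<And>u v v'. u \<in> cball 0 bX \<inter> edom g \<Longrightarrow> v \<in> cball 0 bY \<inter> edom fs \<Longrightarrow>
           v' \<in> cball 0 bY \<inter> edom fs \<Longrightarrow> norm (gy u v - gy u v') \<le> Lyy * norm (v - v')"
    by (rule gradient_lipschitz[of "cball 0 bX" "cball 0 bY"]) auto
  have "norm (gy u v) \<le> norm (gy u v0) + Lyy * (2 * bY)" if v: "v \<in> cball 0 bY \<inter> edom fs" for v
  proof -
    have "norm (gy u v - gy u v0) \<le> Lyy * (2 * bY)"
      using Ly[OF u v v0] norm_diff_le_cball[of v bY v0] v v0 L
      by (meson IntD1 mult_left_mono order_trans)
    then show ?thesis using norm_triangle_sub[of "gy u v" "gy u v0"] by linarith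
  qed
  then show ?thesis using that by blast
qed

text \<open>Convexity in x and concavity in y reduce the oscillation of \<Phi> in y to inner products
  of bounded gradients with bounded displacements.\<close>

lemma \<Phi>_oscillation_bounded:
  assumes s: "(xs, ys) \<in> saddle_set g fs gx gy" and xs: "norm xs \<le> bX" and ys: "norm ys \<le> bY"
  obtains K where "K \<ge> 0" "\<And>u v w. u \<in> cball 0 bX \<inter> edom g \<Longrightarrow> v \<in> cball 0 bY \<inter> edom fs \<Longrightarrow>
      w \<in> cball 0 bY \<inter> edom fs \<Longrightarrow> \<Phi> u w - \<Phi> u v \<le> K"
proof -
  have xsd: "xs \<in> cball 0 bX \<inter> edom g" and ysd: "ys \<in> cball 0 bY \<inter> edom fs"
    using saddle_setD(1,2)[OF s] xs ys by auto
  obtain Bx where Bx: "\<And>u v. u \<in> cball 0 bX \<inter> edom g \<Longrightarrow> v \<in> cball 0 bY \<inter> edom fs \<Longrightarrow>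
      norm (gx u v) \<le> Bx"
    using gx_bounded_on_cball[OF xsd ysd] by blast
  obtain By where By: "\<And>v. v \<in> cball 0 bY \<inter> edom fs \<Longrightarrow> norm (gy xs v) \<le> By"
    using gy_bounded_on_cball[OF xsd ysd] by blast
  define K where "K = By * (2 * bY) + Bx * (2 * bX) + Bx * (2 * bX)"
  have osc: "\<Phi> u w - \<Phi> u v \<le> K" if u: "u \<in> cball 0 bX \<inter> edom g"
    and v: "v \<in> cball 0 bY \<inter> edom fs" and w: "w \<in> cball 0 bY \<inter> edom fs" for u v w
  proof -
    have "\<Phi> u w + inner (gx u w) (xs - u) \<le> \<Phi> xs w" using \<Phi>_convex_ineq[of w u xs] u w xsd by auto
    moreover have "\<Phi> xs v + inner (gx xs v) (u - xs) \<le> \<Phi> u v" using \<Phi>_convex_ineq[of v xs u] u v xsd by auto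
    moreover have "\<Phi> xs w \<le> \<Phi> xs v + inner (gy xs v) (w - v)" using \<Phi>_concave_ineq[of xs v w] v w xsd by auto
    moreover have "inner (gy xs v) (w - v) \<le> By * (2 * bY)"
      using By[OF v] norm_diff_le_cball[of w bY v] v w by (intro inner_le_of_norm_le) auto
    moreover have "inner (gx u w) (u - xs) \<le> Bx * (2 * bX)"
      using Bx[OF u w] norm_diff_le_cball[of u bX xs] u xsd by (intro inner_le_of_norm_le) auto
    moreover have "inner (gx xs v) (xs - u) \<le> Bx * (2 * bX)"
      using Bx[OF xsd v] norm_diff_le_cball[of xs bX u] u xsd by (intro inner_le_of_norm_le) auto
    moreover have "inner (gx u w) (xs - u) = - inner (gx u w) (u - xs)"
      "inner (gx xs v) (u - xs) = - inner (gx xs v) (xs - u)"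
      by (simp_all add: inner_diff_right)
    ultimately show ?thesis unfolding K_def by linarith
  qed
  moreover have "K \<ge> 0" using osc[OF xsd ysd ysd] by simp
  ultimately show ?thesis using that by blast
qed

text \<open>Only the directional derivatives of \<Phi> in y along edom f* are controlled: the upper bound
  is obtained by testing concavity at the point of the segment [v, w] at distance 1 from v.\<close>

lemma gy_directional_bounds:
  assumes s: "(xs, ys) \<in> saddle_set g fs gx gy" and xs: "norm xs \<le> bX" and ys: "norm ys \<le> bY"
  obtains K where "K \<ge> 0"
    "\<And>u v w. u \<in> cball 0 bX \<inter> edom g \<Longrightarrow> v \<in> cball 0 bY \<inter> edom fs \<Longrightarrow> w \<in> edom fs \<Longrightarrow>
        inner (gy u v) (w - v) \<le> K * max 1 (norm (w - v))"
    "\<And>u v w. u \<in> cball 0 bX \<inter> edom g \<Longrightarrow> v \<in> cball 0 bY \<inter> edom fs \<Longrightarrow> w \<in> cball 0 bY \<inter> edom fs \<Longrightarrow>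
        - K \<le> inner (gy u v) (w - v)"
proof -
  obtain K0 where K0: "K0 \<ge> 0" and osc: "\<And>u v w. u \<in> cball 0 bX \<inter> edom g \<Longrightarrow>
      v \<in> cball 0 (bY + 1) \<inter> edom fs \<Longrightarrow> w \<in> cball 0 (bY + 1) \<inter> edom fs \<Longrightarrow> \<Phi> u w - \<Phi> u v \<le> K0"
    using \<Phi>_oscillation_bounded[OF s xs, of "bY + 1"] ys by auto
  obtain Lyy Lxx Lxy where L: "Lyy \<ge> 0"
    and Ly: "\<And>u v v'. u \<in> cball 0 bX \<inter> edom g \<Longrightarrow> v \<in> cball 0 (bY + 1) \<inter> edom fs \<Longrightarrow>
           v' \<in> cball 0 (bY + 1) \<inter> edom fs \<Longrightarrow> norm (gy u v - gy u v') \<le> Lyy * norm (v - v')"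
    by (rule gradient_lipschitz[of "cball 0 bX" "cball 0 (bY + 1)"]) auto
  define K where "K = K0 + Lyy"
  have up: "inner (gy u v) (w - v) \<le> K * max 1 (norm (w - v))"
    if u: "u \<in> cball 0 bX \<inter> edom g" and v: "v \<in> cball 0 bY \<inter> edom fs" and w: "w \<in> edom fs" for u v w
  proof -
    define m where "m = max 1 (norm (w - v))"
    define w' where "w' = (1 - 1 / m) *\<^sub>R v + (1 / m) *\<^sub>R w"
    have m: "m \<ge> 1" by (simp add: m_def)
    have w'd: "w' \<in> edom fs"
      unfolding w'_def using convex_edom_fs v w m by (intro convexD) auto
    have w'v: "w' - v = (1 / m) *\<^sub>R (w - v)" by (simp add: w'_def algebra_simps)
    have nw'v: "norm (w' - v) \<le> 1"
      using m unfolding w'v by (simp add: m_def divide_le_eq)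
    have v1: "v \<in> cball 0 (bY + 1) \<inter> edom fs" using v by auto
    have w'1: "w' \<in> cball 0 (bY + 1) \<inter> edom fs"
      using v nw'v w'd norm_triangle_sub[of w' v] by auto
    have "\<Phi> u v \<le> \<Phi> u w' + inner (gy u w') (v - w')" using \<Phi>_concave_ineq[of u w' v] u v w'd by auto
    moreover have "\<Phi> u w' - \<Phi> u v \<le> K0" using osc[OF u v1 w'1] .
    moreover have "inner (gy u v - gy u w') (w' - v) \<le> Lyy"
    proof -
      have "inner (gy u v - gy u w') (w' - v) \<le> (Lyy * norm (v - w')) * 1"
        using Ly[OF u v1 w'1] nw'v L by (intro inner_le_of_norm_le) auto
      also have "\<dots> \<le> Lyy" using nw'v L by (simp add: norm_minus_commute mult_left_le)
      finally show ?thesis .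
    qed
    ultimately have "inner (gy u v) (w' - v) \<le> K"
      unfolding K_def by (simp add: inner_diff_left inner_diff_right)
    then have "(1 / m) * inner (gy u v) (w - v) \<le> K" unfolding w'v by simp
    then show ?thesis using m by (simp add: m_def field_simps)
  qed
  have low: "- K \<le> inner (gy u v) (w - v)"
    if u: "u \<in> cball 0 bX \<inter> edom g" and v: "v \<in> cball 0 bY \<inter> edom fs" and w: "w \<in> cball 0 bY \<inter> edom fs"
    for u v w
    using \<Phi>_concave_ineq[of u v w] osc[of u w v] u v w L unfolding K_def by auto
  show ?thesis using K0 L by (intro that[OF _ up low]) (simp add: K_def)
qed

lemma y_trial_dist_square_le:
  assumes s: "(xs, ys) \<in> saddle_set g fs gx gy" and t: "0 < t" and K: "0 \<le> K"
    and up: "\<And>w. w \<in> edom fs \<Longrightarrow>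
      inner (gy (x n) (y (n - 1))) (w - y (n - 1)) \<le> K * max 1 (norm (w - y (n - 1)))"
    and low: "- K \<le> inner (gy (x n) (y (n - 1))) (ys - y (n - 1))"
  defines "e \<equiv> norm (y_trial n t - ys)" and "a \<equiv> norm (y (n - 1) - ys)"
  shows "e\<^sup>2 \<le> (a + \<beta> * t * norm (gy xs ys) + \<beta> * t * K) * e + \<beta> * t * K * (2 + a)"
proof -
  define v where "v = y (n - 1)"
  define b where "b = gy (x n) v"
  define lam where "lam = \<beta> * t"
  define P where "P = y_trial n t"
  have lam: "0 < lam" using t \<beta> by (simp add: lam_def)
  have Pd: "P \<in> edom fs" using y_trial_in_edom[OF t] by (simp add: P_def)
  have e0: "e \<ge> 0" and a0: "a \<ge> 0" by (auto simp: e_def a_def)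
  have prox: "inner (v - ys) (ys - P) + e\<^sup>2 + lam * inner b (ys - P) \<le> lam * (F ys - F P)"
  proof -
    have "v + lam *\<^sub>R b - P = (v - ys) + (ys - P) + lam *\<^sub>R b" by simp
    then have "inner (v + lam *\<^sub>R b - P) (ys - P)
        = inner (v - ys) (ys - P) + inner (ys - P) (ys - P) + lam * inner b (ys - P)"
      by (simp only: inner_add_left inner_scaleR_left)
    moreover have "inner (ys - P) (ys - P) = e\<^sup>2"
      by (simp add: e_def P_def power2_norm_eq_inner norm_minus_commute[of _ ys])
    moreover have "inner (v + lam *\<^sub>R b - P) (ys - P) \<le> lam * (F ys - F P)"
      using y_trial_prox_ineq[OF t saddle_setD(2)[OF s], of n]
      by (simp add: v_def lam_def b_def P_def)
    ultimately show ?thesis by simp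
  qed
  have "F ys + inner (gy xs ys) (P - ys) \<le> F P" using saddle_setD(4)[OF s Pd] .
  then have "lam * (F ys - F P) \<le> lam * (norm (gy xs ys) * e)"
    using lam inner_ge_neg_norm_mult[of "gy xs ys" "P - ys"]
    by (intro mult_left_mono) (auto simp: e_def P_def)
  moreover have "- inner (v - ys) (ys - P) \<le> a * e"
    using norm_cauchy_schwarz[of "v - ys" "P - ys"] by (simp add: a_def e_def v_def P_def inner_diff_right)
  moreover have "- (lam * inner b (ys - P)) \<le> lam * (K + K * (1 + e + a))"
  proof -
    have "norm (P - v) \<le> e + a"
      using norm_triangle_ineq4[of "P - ys" "v - ys"] by (simp add: e_def a_def v_def P_def)
    then have "K * max 1 (norm (P - v)) \<le> K * (1 + e + a)" using K e0 a0 by (intro mult_left_mono) auto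
    moreover have "inner b (ys - P) = inner b (ys - v) - inner b (P - v)" by (simp add: inner_diff_right)
    ultimately have "- inner b (ys - P) \<le> K + K * (1 + e + a)"
      using low up[OF Pd] by (simp add: b_def v_def)
    then show ?thesis using lam mult_left_mono[of "- inner b (ys - P)" _ lam] by simp
  qed
  ultimately have "e\<^sup>2 \<le> a * e + lam * (norm (gy xs ys) * e) + lam * (K + K * (1 + e + a))"
    using prox by linarith
  then show ?thesis by (simp add: lam_def algebra_simps)
qed

lemma y_trial_bounded:
  assumes s: "(xs, ys) \<in> saddle_set g fs gx gy" and xs: "norm xs \<le> bX" and ys: "norm ys \<le> bY"
    and xb: "\<And>n. norm (x n) \<le> bX" and yb: "\<And>n. norm (y n) \<le> bY"
  obtains B where "\<And>n t. 0 < t \<Longrightarrow> t \<le> \<tau>max \<Longrightarrow> norm (y_trial n t - ys) \<le> B"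
proof -
  obtain K where K0: "K \<ge> 0"
    and up: "\<And>u v w. u \<in> cball 0 bX \<inter> edom g \<Longrightarrow> v \<in> cball 0 bY \<inter> edom fs \<Longrightarrow> w \<in> edom fs \<Longrightarrow>
        inner (gy u v) (w - v) \<le> K * max 1 (norm (w - v))"
    and low: "\<And>u v w. u \<in> cball 0 bX \<inter> edom g \<Longrightarrow> v \<in> cball 0 bY \<inter> edom fs \<Longrightarrow>
        w \<in> cball 0 bY \<inter> edom fs \<Longrightarrow> - K \<le> inner (gy u v) (w - v)"
    using gy_directional_bounds[OF s xs ys] by blast
  have bY: "bY \<ge> 0" using ys norm_ge_zero[of ys] by linarith
  define A where "A = 2 * bY + \<beta> * \<tau>max * norm (gy xs ys) + \<beta> * \<tau>max * K"
  define B where "B = \<beta> * \<tau>max * K * (2 + 2 * bY)"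
  have "norm (y_trial n t - ys) \<le> A + B + 1" if t: "0 < t" "t \<le> \<tau>max" for n t
  proof -
    define e where "e = norm (y_trial n t - ys)"
    define a where "a = norm (y (n - 1) - ys)"
    have ud: "x n \<in> cball 0 bX \<inter> edom g" and vd: "y (n - 1) \<in> cball 0 bY \<inter> edom fs"
      and ysd: "ys \<in> cball 0 bY \<inter> edom fs"
      using xb yb ys x_in_edom y_in_edom saddle_setD(2)[OF s] by auto
    have a2: "a \<le> 2 * bY" unfolding a_def using vd ysd by (intro norm_diff_le_cball) auto
    have e0: "e \<ge> 0" and a0: "a \<ge> 0" by (auto simp: e_def a_def)
    have bt: "0 \<le> \<beta> * t" "\<beta> * t \<le> \<beta> * \<tau>max" using \<beta> t by auto
    have "e\<^sup>2 \<le> (a + \<beta> * t * norm (gy xs ys) + \<beta> * t * K) * e + \<beta> * t * K * (2 + a)"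
      unfolding e_def a_def
      by (rule y_trial_dist_square_le[OF s t(1) K0 up[OF ud vd] low[OF ud vd ysd]])
    also have "\<dots> \<le> A * e + B"
    proof (intro add_mono mult_right_mono)
      show "a + \<beta> * t * norm (gy xs ys) + \<beta> * t * K \<le> A"
        unfolding A_def using a2 bt K0 by (intro add_mono mult_right_mono) auto
      show "\<beta> * t * K * (2 + a) \<le> B"
        unfolding B_def using a2 a0 bt K0 t \<beta> by (intro mult_mono mult_right_mono) auto
    qed (use e0 in auto)
    finally have "e\<^sup>2 \<le> A * e + B" .
    then have "e \<le> A + B + 1"
      using e0 \<beta> \<tau>max K0 bY by (intro le_of_square_le_affine) (auto simp: A_def B_def)
    then show ?thesis by (simp add: e_def)
  qed
  then show ?thesis using that by blast
qed

lemma iterates_in_cball: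
  obtains bX bY where "\<And>n. x n \<in> cball 0 bX \<inter> edom g" "\<And>n. y n \<in> cball 0 bY \<inter> edom fs"
    "\<And>n t. 0 < t \<Longrightarrow> t \<le> \<tau>max \<Longrightarrow> y_trial n t \<in> cball 0 bY \<inter> edom fs"
proof -
  obtain xs ys where s: "(xs, ys) \<in> saddle_set g fs gx gy" by (rule saddle_point_exists)
  obtain bX0 bY0 where bX0: "\<And>n. norm (x n) \<le> bX0" and bY0: "\<And>n. norm (y n) \<le> bY0"
    using bounded_x bounded_y by (auto simp: bounded_iff)
  define bX where "bX = max bX0 (norm xs)"
  define bY where "bY = max bY0 (norm ys)"
  have bX: "norm xs \<le> bX" "\<And>n. norm (x n) \<le> bX" using bX0 by (auto simp: bX_def le_max_iff_disj)
  have bY: "norm ys \<le> bY" "\<And>n. norm (y n) \<le> bY" using bY0 by (auto simp: bY_def le_max_iff_disj)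
  obtain B where B: "\<And>n t. 0 < t \<Longrightarrow> t \<le> \<tau>max \<Longrightarrow> norm (y_trial n t - ys) \<le> B"
    using y_trial_bounded[OF s bX(1) bY(1) bX(2) bY(2)] by blast
  have "y_trial n t \<in> cball 0 (bY + max B 0) \<inter> edom fs" if "0 < t" "t \<le> \<tau>max" for n t
    using norm_triangle_sub[of "y_trial n t" ys] B[OF that, of n] bY(1) y_trial_in_edom[OF that(1)]
    by auto
  moreover have "y n \<in> cball 0 (bY + max B 0) \<inter> edom fs" for n
    using bY(2)[of n] y_in_edom[of n] by auto
  moreover have "x n \<in> cball 0 bX \<inter> edom g" for n using bX(2)[of n] x_in_edom[of n] by auto
  ultimately show ?thesis using that by blast
qed

lemma line_search_lhs_le:
  assumes t: "0 \<le> t" and P: "P \<in> edom fs"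
    and Ly: "norm (gy (x n) P - gy (x n) (y (n - 1))) \<le> Lyy * norm (P - y (n - 1))"
    and Lx: "norm (gx (x n) P - gx (x (n - 1)) (y (n - 1)))
               \<le> Lxx * norm (x n - x (n - 1)) + Lxy * norm (P - y (n - 1))"
  shows "t * \<tau> (n - 1) / \<xi> * (norm (gx (x n) P - gx (x (n - 1)) (y (n - 1))))\<^sup>2
     + 2 * t * (\<Phi> (x n) (y (n - 1)) + inner (gy (x n) (y (n - 1))) (P - y (n - 1)) - \<Phi> (x n) P)
     \<le> (t * \<tau> (n - 1) / \<xi> * (2 * Lxx\<^sup>2)) * (norm (x n - x (n - 1)))\<^sup>2
       + (t * \<tau> (n - 1) / \<xi> * (2 * Lxy\<^sup>2) + 2 * t * Lyy) * (norm (P - y (n - 1)))\<^sup>2"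
proof -
  define DX where "DX = (norm (x n - x (n - 1)))\<^sup>2"
  define DY where "DY = (norm (P - y (n - 1)))\<^sup>2"
  have "(norm (gx (x n) P - gx (x (n - 1)) (y (n - 1))))\<^sup>2
      \<le> (Lxx * norm (x n - x (n - 1)) + Lxy * norm (P - y (n - 1)))\<^sup>2"
    using Lx by (intro power_mono) auto
  also have "\<dots> \<le> 2 * Lxx\<^sup>2 * DX + 2 * Lxy\<^sup>2 * DY"
    using square_sum_le[of "Lxx * norm (x n - x (n - 1))" "Lxy * norm (P - y (n - 1))"]
    by (simp add: DX_def DY_def power_mult_distrib)
  finally have theta: "(norm (gx (x n) P - gx (x (n - 1)) (y (n - 1))))\<^sup>2 \<le> 2 * Lxx\<^sup>2 * DX + 2 * Lxy\<^sup>2 * DY" .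
  have "\<Phi> (x n) (y (n - 1)) \<le> \<Phi> (x n) P + inner (gy (x n) P) (y (n - 1) - P)"
    using \<Phi>_concave_ineq[OF x_in_edom P y_in_edom] .
  moreover have "inner (gy (x n) P - gy (x n) (y (n - 1))) (y (n - 1) - P)
      \<le> (Lyy * norm (P - y (n - 1))) * norm (y (n - 1) - P)"
    using Ly by (intro inner_le_of_norm_le) auto
  ultimately have "\<Phi> (x n) (y (n - 1)) + inner (gy (x n) (y (n - 1))) (P - y (n - 1)) - \<Phi> (x n) P
      \<le> Lyy * DY"
    by (simp add: DY_def norm_minus_commute power2_eq_square inner_diff_left inner_diff_right)
  from mult_left_mono[OF this, of "2 * t"]
  have "2 * t * (\<Phi> (x n) (y (n - 1)) + inner (gy (x n) (y (n - 1))) (P - y (n - 1)) - \<Phi> (x n) P)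
      \<le> 2 * t * (Lyy * DY)" using t by simp
  moreover have "t * \<tau> (n - 1) / \<xi> * (norm (gx (x n) P - gx (x (n - 1)) (y (n - 1))))\<^sup>2
      \<le> t * \<tau> (n - 1) / \<xi> * (2 * Lxx\<^sup>2 * DX + 2 * Lxy\<^sup>2 * DY)"
    using t tau_pos[of "n - 1"] \<xi> by (intro mult_left_mono[OF theta]) auto
  moreover have "t * \<tau> (n - 1) / \<xi> * (2 * Lxx\<^sup>2 * DX + 2 * Lxy\<^sup>2 * DY) + 2 * t * (Lyy * DY)
      = (t * \<tau> (n - 1) / \<xi> * (2 * Lxx\<^sup>2)) * DX + (t * \<tau> (n - 1) / \<xi> * (2 * Lxy\<^sup>2) + 2 * t * Lyy) * DY"
    by (simp add: algebra_simps)
  ultimately show ?thesis unfolding DX_def[symmetric] DY_def[symmetric] by linarith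
qed

lemma small_step_coefficients_le:
  assumes L: "0 \<le> Lyy" "0 \<le> Lxx" "0 \<le> Lxy" and t: "0 < t"
    and tx: "t \<le> \<nu> * \<omega> * \<xi> / (2 * (Lxx\<^sup>2 + 1) * \<tau>max)"
    and ty: "t \<le> \<nu> / (\<beta> * (2 * \<tau>max * Lxy\<^sup>2 / \<xi> + 2 * Lyy + 1))"
  shows "t * \<tau> (n - 1) / \<xi> * (2 * Lxx\<^sup>2) \<le> \<nu> * \<omega> * \<delta> (n - 1)"
    and "t * \<tau> (n - 1) / \<xi> * (2 * Lxy\<^sup>2) + 2 * t * Lyy \<le> \<nu> * (1 / \<beta>)"
proof -
  define t0 where "t0 = \<tau> (n - 1)"
  have t0: "0 < t0" "t0 \<le> \<tau>max" using tau_pos tau_le_max by (auto simp: t0_def)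
  have Lxx1: "0 < Lxx\<^sup>2 + 1" by (rule add_nonneg_pos) simp_all
  define \<kappa>x where "\<kappa>x = \<nu> * \<omega> * \<xi> / (2 * (Lxx\<^sup>2 + 1) * \<tau>max)"
  have "t * t0 / \<xi> * (2 * Lxx\<^sup>2) \<le> \<kappa>x * t0 / \<xi> * (2 * (Lxx\<^sup>2 + 1))"
    using t tx t0 \<xi> unfolding \<kappa>x_def[symmetric] by (intro mult_mono divide_right_mono) auto
  also have "\<dots> = (\<kappa>x * (2 * (Lxx\<^sup>2 + 1) * \<tau>max)) * t0 / (\<xi> * \<tau>max)"
    using \<xi> \<tau>max by (simp add: field_simps)
  also have "\<dots> = \<nu> * \<omega> * (t0 / \<tau>max)"
    using Lxx1 \<xi> \<tau>max unfolding \<kappa>x_def by simp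
  also have "\<dots> \<le> \<nu> * \<omega> * \<delta> (n - 1)"
    using delta_ge[of "n - 1"] \<nu> \<omega>_pos by (intro mult_left_mono) (auto simp: t0_def)
  finally show "t * \<tau> (n - 1) / \<xi> * (2 * Lxx\<^sup>2) \<le> \<nu> * \<omega> * \<delta> (n - 1)" by (simp add: t0_def)
  have "0 \<le> 2 * \<tau>max * Lxy\<^sup>2 / \<xi> + 2 * Lyy" using \<xi> \<tau>max L by simp
  then have dy: "0 < \<beta> * (2 * \<tau>max * Lxy\<^sup>2 / \<xi> + 2 * Lyy + 1)" using \<beta> by simp
  have "2 * t0 * Lxy\<^sup>2 / \<xi> \<le> 2 * \<tau>max * Lxy\<^sup>2 / \<xi>"
    using t0 \<xi> by (intro divide_right_mono mult_right_mono) auto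
  then have "t * (2 * t0 * Lxy\<^sup>2 / \<xi> + 2 * Lyy)
      \<le> (\<nu> / (\<beta> * (2 * \<tau>max * Lxy\<^sup>2 / \<xi> + 2 * Lyy + 1))) * (2 * \<tau>max * Lxy\<^sup>2 / \<xi> + 2 * Lyy + 1)"
    using t ty t0 \<xi> L by (intro mult_mono) auto
  also have "\<dots> = \<nu> * (1 / \<beta>)" using dy \<beta> by (simp add: field_simps)
  finally show "t * \<tau> (n - 1) / \<xi> * (2 * Lxy\<^sup>2) + 2 * t * Lyy \<le> \<nu> * (1 / \<beta>)"
    by (simp add: t0_def algebra_simps)
qed

lemma line_search_accepts_small_steps:
  obtains \<kappa> where "\<kappa> > 0"
    "\<And>n t. n \<ge> 1 \<Longrightarrow> 0 < t \<Longrightarrow> t \<le> \<tau>max \<Longrightarrow> t \<le> \<kappa> \<Longrightarrow>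
       pdacl_test \<Phi> gx gy \<xi> \<omega> \<nu> \<eta> \<beta> M x y \<tau> \<delta> n t (y_trial n t)"
proof -
  obtain bX bY where x_in: "\<And>n. x n \<in> cball 0 bX \<inter> edom g" and y_in: "\<And>n. y n \<in> cball 0 bY \<inter> edom fs"
    and trial_in: "\<And>n t. 0 < t \<Longrightarrow> t \<le> \<tau>max \<Longrightarrow> y_trial n t \<in> cball 0 bY \<inter> edom fs"
    using iterates_in_cball by blast
  obtain Lyy Lxx Lxy where L: "Lyy \<ge> 0" "Lxx \<ge> 0" "Lxy > 0"
    and Ly: "\<And>u v v'. u \<in> cball 0 bX \<inter> edom g \<Longrightarrow> v \<in> cball 0 bY \<inter> edom fs \<Longrightarrow>
           v' \<in> cball 0 bY \<inter> edom fs \<Longrightarrow> norm (gy u v - gy u v') \<le> Lyy * norm (v - v')"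
    and Lx: "\<And>u u' v v'. u \<in> cball 0 bX \<inter> edom g \<Longrightarrow> u' \<in> cball 0 bX \<inter> edom g \<Longrightarrow>
           v \<in> cball 0 bY \<inter> edom fs \<Longrightarrow> v' \<in> cball 0 bY \<inter> edom fs \<Longrightarrow>
           norm (gx u v - gx u' v') \<le> Lxx * norm (u - u') + Lxy * norm (v - v')"
    by (rule gradient_lipschitz[of "cball 0 bX" "cball 0 bY"]) auto
  define \<kappa>x where "\<kappa>x = \<nu> * \<omega> * \<xi> / (2 * (Lxx\<^sup>2 + 1) * \<tau>max)"
  define \<kappa>y where "\<kappa>y = \<nu> / (\<beta> * (2 * \<tau>max * Lxy\<^sup>2 / \<xi> + 2 * Lyy + 1))"
  have "0 < Lxx\<^sup>2 + 1" by (rule add_nonneg_pos) simp_all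
  then have "\<kappa>x > 0" using \<nu> \<omega>_pos \<xi> \<tau>max unfolding \<kappa>x_def by simp
  moreover have "\<kappa>y > 0" using \<nu> \<beta> \<xi> \<tau>max L unfolding \<kappa>y_def by (simp add: add_pos_nonneg)
  moreover have "pdacl_test \<Phi> gx gy \<xi> \<omega> \<nu> \<eta> \<beta> M x y \<tau> \<delta> n t (y_trial n t)"
    if n: "n \<ge> 1" and t: "0 < t" "t \<le> \<tau>max" "t \<le> min \<kappa>x \<kappa>y" for n t
  proof -
    define DX where "DX = (norm (x n - x (n - 1)))\<^sup>2"
    define DY where "DY = (norm (y_trial n t - y (n - 1)))\<^sup>2"
    note coeff = small_step_coefficients_le[of Lyy Lxx Lxy t n]
    have P: "y_trial n t \<in> cball 0 bY \<inter> edom fs" by (rule trial_in[OF t(1,2)])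
    note lhs = line_search_lhs_le[OF less_imp_le[OF t(1)] IntD2[OF P] Ly[OF x_in[of n] P y_in[of "n - 1"]]
        Lx[OF x_in[of n] x_in[of "n - 1"] P y_in[of "n - 1"]]]
    have "(t * \<tau> (n - 1) / \<xi> * (2 * Lxx\<^sup>2)) * DX + (t * \<tau> (n - 1) / \<xi> * (2 * Lxy\<^sup>2) + 2 * t * Lyy) * DY
        \<le> \<nu> * (\<omega> * \<delta> (n - 1) * DX + (1 / \<beta>) * DY)"
      using mult_right_mono[OF coeff(1), of DX] mult_right_mono[OF coeff(2), of DY] L t
      unfolding \<kappa>x_def \<kappa>y_def by (simp add: DX_def DY_def algebra_simps)
    moreover have "0 \<le> (1 - \<nu>) * avg_res n" using avg_res_nonneg[of n] \<nu> by simp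
    ultimately show ?thesis
      using lhs unfolding line_search_test_iff DX_def[symmetric] DY_def[symmetric] by linarith
  qed
  ultimately show ?thesis using that[of "min \<kappa>x \<kappa>y"] by simp
qed

lemma tau_lower_bound:
  obtains \<tau>min where "\<tau>min > 0" "\<And>n. \<tau>min \<le> \<tau> n"
proof -
  obtain \<kappa> where \<kappa>: "\<kappa> > 0" and accept: "\<And>n t. n \<ge> 1 \<Longrightarrow> 0 < t \<Longrightarrow> t \<le> \<tau>max \<Longrightarrow> t \<le> \<kappa> \<Longrightarrow>
       pdacl_test \<Phi> gx gy \<xi> \<omega> \<nu> \<eta> \<beta> M x y \<tau> \<delta> n t (y_trial n t)"
    using line_search_accepts_small_steps by blast
  \<comment> \<open>a backtracking step below \<tau>(0) is only taken from a rejected trial step larger than \<kappa>\<close>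
  have "min (\<tau> 0) (\<mu> * \<kappa>) \<le> \<tau> n" for n
  proof (induction n)
    case (Suc n)
    obtain i where i: "\<tau> (Suc n) = tau_bar (Suc n) * \<mu> ^ i"
      and rejected: "\<forall>j<i. \<not> pdacl_test \<Phi> gx gy \<xi> \<omega> \<nu> \<eta> \<beta> M x y \<tau> \<delta> (Suc n)
                        (tau_bar (Suc n) * \<mu> ^ j) (y_trial (Suc n) (tau_bar (Suc n) * \<mu> ^ j))"
      using line_search[of "Suc n"] by auto
    have bar: "\<tau> n \<le> tau_bar (Suc n)" "tau_bar (Suc n) \<le> \<tau>max" "0 < tau_bar (Suc n)"
      using tau_le_max[of n] tau_pos[of n] \<phi> \<tau>max by (auto simp: tau_bar_def)
    show ?case
    proof (cases i)
      case 0
      then show ?thesis using i bar Suc by simp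
    next
      case (Suc j)
      define t where "t = tau_bar (Suc n) * \<mu> ^ j"
      have "0 < t" "t \<le> \<tau>max"
        using bar \<mu> power_le_one[of \<mu> j] by (auto simp: t_def intro: order_trans[OF mult_left_le])
      then have "\<kappa> < t" using rejected accept[of "Suc n" t] Suc by (force simp: t_def)
      then have "\<mu> * \<kappa> < \<tau> (Suc n)" using i Suc \<mu> by (simp add: t_def mult.commute mult.left_commute)
      then show ?thesis by linarith
    qed
  qed (simp)
  moreover have "min (\<tau> 0) (\<mu> * \<kappa>) > 0" using \<tau>0 \<mu> \<kappa> by simp
  ultimately show ?thesis using that by blast
qed

section \<open>Convergence of the iterates\<close>

lemma energy_x_term_tendsto_zero: "(\<lambda>n. \<omega> * \<delta> (n - 1) * (norm (x n - x (n - 1)))\<^sup>2) \<longlonglongrightarrow> 0"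
proof (rule tendsto_sandwich[OF _ _ tendsto_const res_tendsto_zero])
  show "eventually (\<lambda>n. 0 \<le> \<omega> * \<delta> (n - 1) * (norm (x n - x (n - 1)))\<^sup>2) sequentially"
  proof (intro always_eventually allI)
    show "0 \<le> \<omega> * \<delta> (n - 1) * (norm (x n - x (n - 1)))\<^sup>2" for n
      using \<omega>_pos delta_pos[of "n - 1"] by simp
  qed
  show "eventually (\<lambda>n. \<omega> * \<delta> (n - 1) * (norm (x n - x (n - 1)))\<^sup>2 \<le> res n) sequentially"
    using \<beta> by (intro always_eventually allI) (simp add: res_eq)
qed

lemma y_diff_tendsto_zero: "(\<lambda>n. y n - y (n - 1)) \<longlonglongrightarrow> 0"
proof (rule Lim_null_comparison)
  show "eventually (\<lambda>n. norm (y n - y (n - 1)) \<le> sqrt (\<beta> * res n)) sequentially"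
  proof (intro always_eventually allI)
    fix n
    have "(1 / \<beta>) * (norm (y n - y (n - 1)))\<^sup>2 \<le> res n"
      using \<omega>_pos delta_pos[of "n - 1"] unfolding res_eq by simp
    then show "norm (y n - y (n - 1)) \<le> sqrt (\<beta> * res n)"
      using \<beta> by (simp add: real_le_rsqrt divide_le_eq mult.commute)
  qed
  show "(\<lambda>n. sqrt (\<beta> * res n)) \<longlonglongrightarrow> 0"
    using tendsto_real_sqrt[OF tendsto_mult[OF tendsto_const res_tendsto_zero, of \<beta>]] by simp
qed

lemma x_diff_tendsto_zero: "(\<lambda>n. x n - x (n - 1)) \<longlonglongrightarrow> 0"
proof -
  obtain \<tau>min where \<tau>min: "\<tau>min > 0" "\<And>n. \<tau>min \<le> \<tau> n" using tau_lower_bound by blast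
  define c where "c = \<omega> * (\<tau>min / \<tau>max)"
  have c: "c > 0" using \<omega>_pos \<tau>min \<tau>max by (simp add: c_def)
  show ?thesis
  proof (rule Lim_null_comparison)
    show "eventually (\<lambda>n. norm (x n - x (n - 1)) \<le> sqrt (res n / c)) sequentially"
    proof (intro always_eventually allI)
      fix n
      have "\<tau>min / \<tau>max \<le> \<tau> (n - 1) / \<tau>max"
        using \<tau>min(2)[of "n - 1"] \<tau>max by (simp add: divide_right_mono)
      then have "\<tau>min / \<tau>max \<le> \<delta> (n - 1)" using delta_ge[of "n - 1"] by linarith
      then have "c * (norm (x n - x (n - 1)))\<^sup>2 \<le> \<omega> * \<delta> (n - 1) * (norm (x n - x (n - 1)))\<^sup>2"
        unfolding c_def using \<omega>_pos by (intro mult_right_mono mult_left_mono) auto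
      also have "\<dots> \<le> res n" using \<beta> unfolding res_eq by simp
      finally show "norm (x n - x (n - 1)) \<le> sqrt (res n / c)"
        using c by (simp add: real_le_rsqrt le_divide_eq mult.commute)
    qed
    show "(\<lambda>n. sqrt (res n / c)) \<longlonglongrightarrow> 0"
      using tendsto_real_sqrt[OF tendsto_divide[OF res_tendsto_zero tendsto_const, of c]] c by simp
  qed
qed

lemma z_minus_x_tendsto_zero: "(\<lambda>n. z n - x n) \<longlonglongrightarrow> 0"
proof -
  have "(\<lambda>n. norm (z n - x n)) \<longlonglongrightarrow> 0"
  proof (rule contraction_tendsto_zero[where q = "1 / \<psi>" and b = "\<lambda>n. norm (x (Suc n) - x n)"])
    show "norm (z (Suc n) - x (Suc n)) \<le> 1 / \<psi> * norm (z n - x n) + norm (x (Suc n) - x n)" for n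
    proof -
      have e: "z (Suc n) - x (Suc n) = (1 / \<psi>) *\<^sub>R (z n - x n) - (x (Suc n) - x n)"
        using z_Suc_minus_x[of n] by (simp add: algebra_simps)
      show ?thesis unfolding e using norm_triangle_ineq4[of "(1 / \<psi>) *\<^sub>R (z n - x n)" "x (Suc n) - x n"] \<psi>
        by simp
    qed
    show "(\<lambda>n. norm (x (Suc n) - x n)) \<longlonglongrightarrow> 0"
      using tendsto_norm[OF LIMSEQ_Suc[OF x_diff_tendsto_zero]] by simp
  qed (use \<psi> in auto)
  then show ?thesis by (simp add: tendsto_norm_zero_iff)
qed

lemma z_Suc_minus_x_tendsto_zero: "(\<lambda>n. z (Suc n) - x n) \<longlonglongrightarrow> 0"
  using tendsto_scaleR[OF tendsto_const z_minus_x_tendsto_zero, of "1 / \<psi>"]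
  by (simp add: z_Suc_minus_x)

definition "cluster_seq \<rho> xb yb \<longleftrightarrow> strict_mono \<rho> \<and> (\<forall>k. 1 \<le> \<rho> k) \<and>
   (\<lambda>k. x (\<rho> k)) \<longlonglongrightarrow> xb \<and> (\<lambda>k. y (\<rho> k)) \<longlonglongrightarrow> yb"

lemma cluster_seq_exists:
  obtains \<rho> xb yb where "cluster_seq \<rho> xb yb"
proof -
  have "bounded (range x \<times> range y)" using bounded_x bounded_y by (rule bounded_Times)
  moreover have "range (\<lambda>n. (x n, y n)) \<subseteq> range x \<times> range y" by auto
  ultimately have "bounded (range (\<lambda>n. (x n, y n)))" by (rule bounded_subset)
  then obtain l \<sigma> where \<sigma>: "strict_mono \<sigma>" and lim: "((\<lambda>n. (x n, y n)) \<circ> \<sigma>) \<longlonglongrightarrow> l"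
    using bounded_imp_convergent_subsequence by blast
  define \<rho> where "\<rho> k = \<sigma> (Suc k)" for k
  have "strict_mono \<rho>" using \<sigma> unfolding \<rho>_def strict_mono_def by simp
  moreover have "1 \<le> \<rho> k" for k using seq_suble[OF \<sigma>, of "Suc k"] by (simp add: \<rho>_def)
  moreover have lim\<rho>: "(\<lambda>k. (x (\<rho> k), y (\<rho> k))) \<longlonglongrightarrow> l"
    using LIMSEQ_Suc[OF lim] by (simp add: \<rho>_def o_def)
  moreover have "(\<lambda>k. x (\<rho> k)) \<longlonglongrightarrow> fst l" using tendsto_fst[OF lim\<rho>] by simp
  moreover have "(\<lambda>k. y (\<rho> k)) \<longlonglongrightarrow> snd l" using tendsto_snd[OF lim\<rho>] by simp
  ultimately show ?thesis using that[of \<rho> "fst l" "snd l"] unfolding cluster_seq_def by blast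
qed

lemma cluster_seq_limits:
  assumes "cluster_seq \<rho> xb yb"
  shows "(\<lambda>k. x (\<rho> k - 1)) \<longlonglongrightarrow> xb" "(\<lambda>k. y (\<rho> k - 1)) \<longlonglongrightarrow> yb" "(\<lambda>k. z (\<rho> k)) \<longlonglongrightarrow> xb"
    "(\<lambda>k. z (Suc (\<rho> k))) \<longlonglongrightarrow> xb" "(\<lambda>k. z (Suc (Suc (\<rho> k)))) \<longlonglongrightarrow> xb"
proof -
  have \<rho>: "strict_mono \<rho>" and lx: "(\<lambda>k. x (\<rho> k)) \<longlonglongrightarrow> xb" and ly: "(\<lambda>k. y (\<rho> k)) \<longlonglongrightarrow> yb"
    using assms by (auto simp: cluster_seq_def)
  have sub: "(\<lambda>k. d (\<rho> k)) \<longlonglongrightarrow> 0" if "d \<longlonglongrightarrow> 0" for d :: "nat \<Rightarrow> 'c::real_normed_vector"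
    using LIMSEQ_subseq_LIMSEQ[OF that \<rho>] by (simp add: o_def)
  show "(\<lambda>k. x (\<rho> k - 1)) \<longlonglongrightarrow> xb" using tendsto_diff[OF lx sub[OF x_diff_tendsto_zero]] by simp
  show "(\<lambda>k. y (\<rho> k - 1)) \<longlonglongrightarrow> yb" using tendsto_diff[OF ly sub[OF y_diff_tendsto_zero]] by simp
  show "(\<lambda>k. z (\<rho> k)) \<longlonglongrightarrow> xb" using tendsto_add[OF lx sub[OF z_minus_x_tendsto_zero]] by simp
  show "(\<lambda>k. z (Suc (\<rho> k))) \<longlonglongrightarrow> xb"
    using tendsto_add[OF lx sub[OF z_Suc_minus_x_tendsto_zero]] by simp
  have lxs: "(\<lambda>k. x (Suc (\<rho> k))) \<longlonglongrightarrow> xb"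
    using tendsto_add[OF lx sub[OF LIMSEQ_Suc[OF x_diff_tendsto_zero]]] by simp
  show "(\<lambda>k. z (Suc (Suc (\<rho> k)))) \<longlonglongrightarrow> xb"
    using tendsto_add[OF lxs sub[OF LIMSEQ_Suc[OF z_Suc_minus_x_tendsto_zero]]] by simp
qed

lemma L_gap_le_energy_drop:
  assumes n: "n \<ge> 1" and xx: "xx \<in> edom g" and yy: "yy \<in> edom fs"
    and \<tau>min: "0 < \<tau>min" "\<tau>min \<le> \<tau> n"
  shows "L (x n) yy - L xx (y n)
           \<le> \<bar>energy xx yy n - energy xx yy (Suc n) + (1 - \<nu>) * avg_res n\<bar> / (2 * \<tau>min)"
proof (cases "L (x n) yy - L xx (y n) \<le> 0")
  case False
  then have "2 * \<tau>min * (L (x n) yy - L xx (y n)) \<le> 2 * \<tau> n * (L (x n) yy - L xx (y n))"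
    using \<tau>min by (intro mult_right_mono) auto
  also have "\<dots> \<le> energy xx yy n - energy xx yy (Suc n) + (1 - \<nu>) * avg_res n"
    using energy_step[OF n xx yy] mult_nonneg_nonneg[OF _ res_nonneg, of "1 - \<nu>" n] \<nu> by simp
  finally show ?thesis using \<tau>min by (simp add: le_divide_eq mult.commute)
next
  case True
  moreover have "0 \<le> \<bar>energy xx yy n - energy xx yy (Suc n) + (1 - \<nu>) * avg_res n\<bar> / (2 * \<tau>min)"
    using \<tau>min by simp
  ultimately show ?thesis by linarith
qed

lemma L_gap_bounded:
  assumes s: "(xs, ys) \<in> saddle_set g fs gx gy"
  obtains C where "\<And>n. n \<ge> 1 \<Longrightarrow> L (x n) ys - L xs (y n) \<le> C"
proof -
  have xs: "xs \<in> edom g" and ys: "ys \<in> edom fs" using saddle_setD[OF s] by auto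
  obtain \<tau>min where \<tau>min: "\<tau>min > 0" "\<And>n. \<tau>min \<le> \<tau> n" using tau_lower_bound by blast
  obtain cB where "\<And>n. norm (avg_res n) \<le> cB"
    using convergent_imp_bounded[OF avg_res_tendsto_zero] by (auto simp: bounded_iff)
  then have cB: "avg_res n \<le> cB" for n by (simp add: abs_le_iff)
  have "L (x n) ys - L xs (y n) \<le> (2 * energy_bound xs ys + (1 - \<nu>) * cB) / (2 * \<tau>min)"
    if n: "n \<ge> 1" for n
  proof -
    have "0 \<le> (1 - \<nu>) * avg_res n" "(1 - \<nu>) * avg_res n \<le> (1 - \<nu>) * cB"
      using avg_res_nonneg[of n] cB[of n] \<nu> by (auto intro: mult_left_mono)
    then have "\<bar>energy xs ys n - energy xs ys (Suc n) + (1 - \<nu>) * avg_res n\<bar>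
        \<le> 2 * energy_bound xs ys + (1 - \<nu>) * cB"
      using energy_nonneg[of xs ys n] energy_nonneg[of xs ys "Suc n"]
        energy_le_bound[OF s n] energy_le_bound[OF s, of "Suc n"]
      unfolding abs_le_iff by linarith
    from divide_right_mono[OF this, of "2 * \<tau>min"] show ?thesis
      using L_gap_le_energy_drop[OF n xs ys \<tau>min(1,2)] \<tau>min(1) by simp
  qed
  then show ?thesis using that by blast
qed

lemma G_F_bounded_above:
  obtains CG CF where "\<And>n. n \<ge> 1 \<Longrightarrow> G (x n) \<le> CG" "\<And>n. n \<ge> 1 \<Longrightarrow> F (y n) \<le> CF"
proof -
  obtain xs ys where s: "(xs, ys) \<in> saddle_set g fs gx gy" by (rule saddle_point_exists)
  have xs: "xs \<in> edom g" and ys: "ys \<in> edom fs" using saddle_setD[OF s] by auto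
  obtain C where gap: "\<And>n. n \<ge> 1 \<Longrightarrow> L (x n) ys - L xs (y n) \<le> C"
    using L_gap_bounded[OF s] by blast
  obtain bx by' where bx: "\<And>n. norm (x n) \<le> bx" and by': "\<And>n. norm (y n) \<le> by'"
    using bounded_x bounded_y by (auto simp: bounded_iff)
  have "G (x n) \<le> C + L xs ys + F ys - \<Phi> xs ys + norm (gx xs ys) * (bx + norm xs)"
    if n: "n \<ge> 1" for n
  proof -
    have "L xs (y n) \<le> L xs ys" using saddle_point_ineq[OF s xs y_in_edom] .
    moreover have "\<Phi> xs ys + inner (gx xs ys) (x n - xs) \<le> \<Phi> (x n) ys"
      using \<Phi>_convex_ineq[OF ys xs x_in_edom] .
    moreover have "- inner (gx xs ys) (x n - xs) \<le> norm (gx xs ys) * (bx + norm xs)"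
      using inner_le_of_norm_le[of "gx xs ys" _ "xs - x n" "bx + norm xs"]
        norm_triangle_ineq4[of xs "x n"] bx[of n]
      by (simp add: inner_diff_right)
    ultimately show ?thesis using gap[OF n] by (simp add: L_def)
  qed
  moreover have "F (y n) \<le> C - L xs ys + G xs + \<Phi> xs ys + norm (gy xs ys) * (by' + norm ys)"
    if n: "n \<ge> 1" for n
  proof -
    have "L xs ys \<le> L (x n) ys" using saddle_point_ineq[OF s x_in_edom ys] .
    moreover have "\<Phi> xs (y n) \<le> \<Phi> xs ys + inner (gy xs ys) (y n - ys)"
      using \<Phi>_concave_ineq[OF xs ys y_in_edom] .
    moreover have "inner (gy xs ys) (y n - ys) \<le> norm (gy xs ys) * (by' + norm ys)"
      using norm_triangle_ineq4[of "y n" ys] by'[of n]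
      by (intro inner_le_of_norm_le) auto
    ultimately show ?thesis using gap[OF n] by (simp add: L_def)
  qed
  ultimately show ?thesis using that by blast
qed

lemma cluster_in_edom:
  assumes "cluster_seq \<rho> xb yb"
  shows "xb \<in> edom g" "yb \<in> edom fs"
proof -
  have \<rho>1: "\<And>k. 1 \<le> \<rho> k" and lx: "(\<lambda>k. x (\<rho> k)) \<longlonglongrightarrow> xb" and ly: "(\<lambda>k. y (\<rho> k)) \<longlonglongrightarrow> yb"
    using assms by (auto simp: cluster_seq_def)
  obtain CG CF where CG: "\<And>n. n \<ge> 1 \<Longrightarrow> G (x n) \<le> CG" and CF: "\<And>n. n \<ge> 1 \<Longrightarrow> F (y n) \<le> CF"
    using G_F_bounded_above by blast
  have "g (x (\<rho> k)) \<le> ereal CG" for k using CG[OF \<rho>1] g_eq_G[OF x_in_edom] by simp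
  then have "g xb \<le> ereal CG" using closed_fun_le_limit[OF _ lx _ tendsto_const] g
    by (simp add: proper_closed_convex_def)
  then show "xb \<in> edom g" by (auto simp: edom_def)
  have "fs (y (\<rho> k)) \<le> ereal CF" for k using CF[OF \<rho>1] fs_eq_F[OF y_in_edom] by simp
  then have "fs yb \<le> ereal CF" using closed_fun_le_limit[OF _ ly _ tendsto_const] proper_closed_convex_fs
    by (simp add: proper_closed_convex_def)
  then show "yb \<in> edom fs" by (auto simp: edom_def)
qed

lemma gx_prev_tendsto_at_cluster:
  assumes c: "cluster_seq \<rho> xb yb"
  shows "(\<lambda>k. gx (x (\<rho> k - 1)) (y (\<rho> k - 1))) \<longlonglongrightarrow> gx xb yb"
proof -
  have lx: "(\<lambda>k. x (\<rho> k)) \<longlonglongrightarrow> xb" and ly: "(\<lambda>k. y (\<rho> k)) \<longlonglongrightarrow> yb"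
    using c by (auto simp: cluster_seq_def)
  note lim = cluster_seq_limits[OF c]
  obtain bx by' where bx: "\<And>n. norm (x n) \<le> bx" and by': "\<And>n. norm (y n) \<le> by'"
    using bounded_x bounded_y by (auto simp: bounded_iff)
  have xb: "xb \<in> cball 0 bx \<inter> edom g"
    using cluster_in_edom(1)[OF c] tendsto_norm[OF lx] bx by (auto intro: LIMSEQ_le_const2)
  have yb: "yb \<in> cball 0 by' \<inter> edom fs"
    using cluster_in_edom(2)[OF c] tendsto_norm[OF ly] by' by (auto intro: LIMSEQ_le_const2)
  obtain Lyy Lxx Lxy where
    Lx: "\<And>u u' v v'. u \<in> cball 0 bx \<inter> edom g \<Longrightarrow> u' \<in> cball 0 bx \<inter> edom g \<Longrightarrow>
           v \<in> cball 0 by' \<inter> edom fs \<Longrightarrow> v' \<in> cball 0 by' \<inter> edom fs \<Longrightarrow>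
           norm (gx u v - gx u' v') \<le> Lxx * norm (u - u') + Lxy * norm (v - v')"
    by (rule gradient_lipschitz[of "cball 0 bx" "cball 0 by'"]) auto
  have "(\<lambda>k. gx (x (\<rho> k - 1)) (y (\<rho> k - 1)) - gx xb yb) \<longlonglongrightarrow> 0"
  proof (rule Lim_null_comparison)
    show "eventually (\<lambda>k. norm (gx (x (\<rho> k - 1)) (y (\<rho> k - 1)) - gx xb yb)
        \<le> Lxx * norm (x (\<rho> k - 1) - xb) + Lxy * norm (y (\<rho> k - 1) - yb)) sequentially"
      using bx by' x_in_edom y_in_edom xb yb by (intro always_eventually allI Lx) auto
    have "(\<lambda>k. Lxx * norm (x (\<rho> k - 1) - xb) + Lxy * norm (y (\<rho> k - 1) - yb))
        \<longlonglongrightarrow> Lxx * norm (xb - xb) + Lxy * norm (yb - yb)"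
      using lim(1,2) by (intro tendsto_intros)
    then show "(\<lambda>k. Lxx * norm (x (\<rho> k - 1) - xb) + Lxy * norm (y (\<rho> k - 1) - yb)) \<longlonglongrightarrow> 0"
      by simp
  qed
  then show ?thesis by (simp add: LIM_zero_iff)
qed

lemma cluster_x_subgrad:
  assumes c: "cluster_seq \<rho> xb yb" and v: "v \<in> edom g"
  shows "G xb + inner (- gx xb yb) (v - xb) \<le> G v"
proof -
  have \<rho>1: "\<And>k. 1 \<le> \<rho> k" and lx: "(\<lambda>k. x (\<rho> k)) \<longlonglongrightarrow> xb"
    using c by (auto simp: cluster_seq_def)
  obtain \<tau>min where \<tau>min: "\<tau>min > 0" "\<And>n. \<tau>min \<le> \<tau> n" using tau_lower_bound by blast
  \<comment> \<open>p k is the subgradient of g at x(\<rho> k) produced by the proximal step\<close>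
  define p where "p k = (1 / \<tau> (\<rho> k - 1)) *\<^sub>R (z (\<rho> k) - x (\<rho> k)) - gx (x (\<rho> k - 1)) (y (\<rho> k - 1))"
    for k
  have "(\<lambda>k. (1 / \<tau> (\<rho> k - 1)) *\<^sub>R (z (\<rho> k) - x (\<rho> k))) \<longlonglongrightarrow> 0"
  proof (rule Lim_null_comparison)
    show "eventually (\<lambda>k. norm ((1 / \<tau> (\<rho> k - 1)) *\<^sub>R (z (\<rho> k) - x (\<rho> k)))
        \<le> (1 / \<tau>min) * norm (z (\<rho> k) - x (\<rho> k))) sequentially"
    proof (intro always_eventually allI)
      fix k
      have "1 / \<tau> (\<rho> k - 1) \<le> 1 / \<tau>min" using \<tau>min tau_pos[of "\<rho> k - 1"] by (simp add: frac_le)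
      from mult_right_mono[OF this, of "norm (z (\<rho> k) - x (\<rho> k))"]
      show "norm ((1 / \<tau> (\<rho> k - 1)) *\<^sub>R (z (\<rho> k) - x (\<rho> k))) \<le> (1 / \<tau>min) * norm (z (\<rho> k) - x (\<rho> k))"
        using tau_pos[of "\<rho> k - 1"] by simp
    qed
    show "(\<lambda>k. (1 / \<tau>min) * norm (z (\<rho> k) - x (\<rho> k))) \<longlonglongrightarrow> 0"
      using tendsto_mult_left[OF tendsto_norm[OF tendsto_diff[OF cluster_seq_limits(3)[OF c] lx]],
          of "1 / \<tau>min"] by simp
  qed
  then have plim: "p \<longlonglongrightarrow> - gx xb yb"
    unfolding p_def using tendsto_diff[OF _ gx_prev_tendsto_at_cluster[OF c]] by fastforce
  have cl: "closed_fun g" using g by (simp add: proper_closed_convex_def)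
  have "g (x (\<rho> k)) \<le> ereal (G v - inner (p k) (v - x (\<rho> k)))" for k
  proof -
    define n where "n = \<rho> k"
    have n: "n \<ge> 1" and t: "\<tau> (n - 1) > 0" using \<rho>1 tau_pos by (auto simp: n_def)
    have "z n - \<tau> (n - 1) *\<^sub>R gx (x (n - 1)) (y (n - 1)) - x n = \<tau> (n - 1) *\<^sub>R p k"
      using t by (simp add: p_def n_def scaleR_diff_right algebra_simps)
    then have "\<tau> (n - 1) * inner (p k) (v - x n) \<le> \<tau> (n - 1) * (G v - G (x n))"
      using x_prox_ineq[OF n v] by simp
    then show ?thesis using t g_eq_G[OF x_in_edom] by (simp add: n_def)
  qed
  moreover have "(\<lambda>k. G v - inner (p k) (v - x (\<rho> k))) \<longlonglongrightarrow> G v - inner (- gx xb yb) (v - xb)"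
    by (intro tendsto_intros plim lx)
  ultimately have "g xb \<le> ereal (G v - inner (- gx xb yb) (v - xb))"
    by (rule closed_fun_le_limit[OF cl lx])
  then show ?thesis using g_eq_G[OF cluster_in_edom(1)[OF c]] by simp
qed

lemma energy_limit_at_cluster:
  assumes c: "cluster_seq \<rho> xb yb"
  shows "(\<lambda>k. energy xb w (\<rho> k)) \<longlonglongrightarrow> (1 / \<beta>) * (norm (yb - w))\<^sup>2"
    and "(\<lambda>k. energy xb w (Suc (\<rho> k))) \<longlonglongrightarrow> (1 / \<beta>) * (norm (yb - w))\<^sup>2"
proof -
  have \<rho>: "strict_mono \<rho>" and ly: "(\<lambda>k. y (\<rho> k)) \<longlonglongrightarrow> yb" using c by (auto simp: cluster_seq_def)
  note lim = cluster_seq_limits[OF c]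
  define e where "e n = \<omega> * \<delta> (n - 1) * (norm (x n - x (n - 1)))\<^sup>2" for n
  have e: "(\<lambda>k. e (\<rho> k)) \<longlonglongrightarrow> 0" "(\<lambda>k. e (Suc (\<rho> k))) \<longlonglongrightarrow> 0"
    using LIMSEQ_subseq_LIMSEQ[OF energy_x_term_tendsto_zero \<rho>]
      LIMSEQ_subseq_LIMSEQ[OF LIMSEQ_Suc[OF energy_x_term_tendsto_zero] \<rho>]
    by (simp_all add: o_def e_def)
  have "(\<lambda>k. (\<psi> / (\<psi> - 1)) * (norm (z (Suc (\<rho> k)) - xb))\<^sup>2 + (1 / \<beta>) * (norm (y (\<rho> k - 1) - w))\<^sup>2
      + e (\<rho> k)) \<longlonglongrightarrow> (\<psi> / (\<psi> - 1)) * (norm (xb - xb))\<^sup>2 + (1 / \<beta>) * (norm (yb - w))\<^sup>2 + 0"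
    using lim(4,2) e(1) by (intro tendsto_intros)
  then show "(\<lambda>k. energy xb w (\<rho> k)) \<longlonglongrightarrow> (1 / \<beta>) * (norm (yb - w))\<^sup>2"
    by (simp add: energy_def e_def)
  have "(\<lambda>k. (\<psi> / (\<psi> - 1)) * (norm (z (Suc (Suc (\<rho> k))) - xb))\<^sup>2 + (1 / \<beta>) * (norm (y (\<rho> k) - w))\<^sup>2
      + e (Suc (\<rho> k))) \<longlonglongrightarrow> (\<psi> / (\<psi> - 1)) * (norm (xb - xb))\<^sup>2 + (1 / \<beta>) * (norm (yb - w))\<^sup>2 + 0"
    using lim(5) ly e(2) by (intro tendsto_intros)
  then show "(\<lambda>k. energy xb w (Suc (\<rho> k))) \<longlonglongrightarrow> (1 / \<beta>) * (norm (yb - w))\<^sup>2"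
    by (simp add: energy_def e_def)
qed

text \<open>The energy inequality with reference point (xb, w) bounds the primal-dual gap along the
  subsequence by a quantity tending to zero; closedness of f* passes the bound to the limit.\<close>

lemma cluster_y_minimizes:
  assumes c: "cluster_seq \<rho> xb yb"
    and x_subgrad: "\<And>v. v \<in> edom g \<Longrightarrow> G xb + inner (- gx xb yb) (v - xb) \<le> G v"
    and w: "w \<in> edom fs"
  shows "F yb - \<Phi> xb yb \<le> F w - \<Phi> xb w"
proof -
  have \<rho>1: "\<And>k. 1 \<le> \<rho> k" and lx: "(\<lambda>k. x (\<rho> k)) \<longlonglongrightarrow> xb" and ly: "(\<lambda>k. y (\<rho> k)) \<longlonglongrightarrow> yb"
    using c by (auto simp: cluster_seq_def)
  have xb: "xb \<in> edom g" and yb: "yb \<in> edom fs" using cluster_in_edom[OF c] by auto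
  obtain \<tau>min where \<tau>min: "\<tau>min > 0" "\<And>n. \<tau>min \<le> \<tau> n" using tau_lower_bound by blast
  have cl: "closed_fun fs" using proper_closed_convex_fs by (simp add: proper_closed_convex_def)
  define D where "D k = energy xb w (\<rho> k) - energy xb w (Suc (\<rho> k)) + (1 - \<nu>) * avg_res (\<rho> k)" for k
  have "D \<longlonglongrightarrow> (1 / \<beta>) * (norm (yb - w))\<^sup>2 - (1 / \<beta>) * (norm (yb - w))\<^sup>2 + (1 - \<nu>) * 0"
    unfolding D_def using energy_limit_at_cluster[OF c] LIMSEQ_subseq_LIMSEQ[OF avg_res_tendsto_zero]
      c by (intro tendsto_intros) (auto simp: cluster_seq_def o_def)
  then have Dlim: "D \<longlonglongrightarrow> 0" by simp
  define T where "T k = \<bar>D k\<bar> / (2 * \<tau>min) + inner (gx xb yb) (x (\<rho> k) - xb) - \<Phi> xb w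
      - inner (gx xb w) (x (\<rho> k) - xb) + F w + \<Phi> xb yb + inner (gy xb yb) (y (\<rho> k) - yb)" for k
  have "fs (y (\<rho> k)) \<le> ereal (T k)" for k
  proof -
    define n where "n = \<rho> k"
    have n: "n \<ge> 1" using \<rho>1 by (simp add: n_def)
    define gap where "gap = L (x n) w - L xb (y n)"
    have "gap \<le> \<bar>D k\<bar> / (2 * \<tau>min)"
      using L_gap_le_energy_drop[OF n xb w \<tau>min(1,2)] unfolding gap_def D_def n_def .
    moreover have "G xb + inner (- gx xb yb) (x n - xb) \<le> G (x n)" by (rule x_subgrad[OF x_in_edom])
    moreover have "\<Phi> xb w + inner (gx xb w) (x n - xb) \<le> \<Phi> (x n) w" by (rule \<Phi>_convex_ineq[OF w xb x_in_edom])
    moreover have "\<Phi> xb (y n) \<le> \<Phi> xb yb + inner (gy xb yb) (y n - yb)"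
      by (rule \<Phi>_concave_ineq[OF xb yb y_in_edom])
    ultimately have "F (y n) \<le> T k"
      unfolding gap_def L_def T_def n_def[symmetric] by (simp add: inner_minus_left)
    then show ?thesis using fs_eq_F[OF y_in_edom] by (simp add: n_def)
  qed
  moreover have "T \<longlonglongrightarrow> \<bar>0\<bar> / (2 * \<tau>min) + inner (gx xb yb) (xb - xb) - \<Phi> xb w
      - inner (gx xb w) (xb - xb) + F w + \<Phi> xb yb + inner (gy xb yb) (yb - yb)"
    unfolding T_def using Dlim lx ly \<tau>min by (intro tendsto_intros) auto
  then have "T \<longlonglongrightarrow> F w - \<Phi> xb w + \<Phi> xb yb" by simp
  ultimately have "fs yb \<le> ereal (F w - \<Phi> xb w + \<Phi> xb yb)"
    by (rule closed_fun_le_limit[OF cl ly])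
  then show ?thesis using fs_eq_F[OF yb] by simp
qed

lemma cluster_y_subgrad:
  assumes xb: "xb \<in> edom g" and yb: "yb \<in> edom fs"
    and min: "\<And>w. w \<in> edom fs \<Longrightarrow> F yb - \<Phi> xb yb \<le> F w - \<Phi> xb w"
    and w: "w \<in> edom fs"
  shows "F yb + inner (gy xb yb) (w - yb) \<le> F w"
proof -
  have der: "((\<lambda>v. \<Phi> xb v) has_derivative (\<lambda>h. inner (gy xb yb) h)) (at yb)"
    using \<Phi>_y xb yb by blast
  have cv: "convex_fun fs" using proper_closed_convex_fs by (simp add: proper_closed_convex_def)
  have "inner (gy xb yb) (w - yb) \<le> F w - F yb"
  proof (rule has_derivative_inner_le_of_quotient_le[OF der])
    fix t :: real assume t: "0 < t" "t < 1"
    define w' where "w' = (1 - t) *\<^sub>R yb + t *\<^sub>R w"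
    have "yb + t *\<^sub>R (w - yb) = w'" by (simp add: w'_def algebra_simps)
    moreover have w': "w' \<in> edom fs" unfolding w'_def using convex_edom_fs yb w t by (intro convexD) auto
    moreover have "fs w' \<le> ereal ((1 - t) * F yb + t * F w)"
      unfolding w'_def using convex_fun_le_combination[OF cv, of yb "F yb" w "F w" t] fs_eq_F[OF yb]
        fs_eq_F[OF w] t by simp
    ultimately have "\<Phi> xb (yb + t *\<^sub>R (w - yb)) - \<Phi> xb yb \<le> t * (F w - F yb)"
      using min[OF w'] fs_eq_F[OF w'] by (simp add: algebra_simps)
    then show "(\<Phi> xb (yb + t *\<^sub>R (w - yb)) - \<Phi> xb yb) / t \<le> F w - F yb"
      using t by (simp add: divide_le_eq mult.commute)
  qed
  then show ?thesis by simp
qed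

lemma cluster_in_saddle_set:
  assumes c: "cluster_seq \<rho> xb yb"
  shows "(xb, yb) \<in> saddle_set g fs gx gy"
proof -
  have xb: "xb \<in> edom g" and yb: "yb \<in> edom fs" using cluster_in_edom[OF c] by auto
  have x_subgrad: "G xb + inner (- gx xb yb) (v - xb) \<le> G v" if "v \<in> edom g" for v
    using cluster_x_subgrad[OF c that] .
  have "F yb - \<Phi> xb yb \<le> F w - \<Phi> xb w" if "w \<in> edom fs" for w
    using cluster_y_minimizes[OF c x_subgrad that] .
  then have "F yb + inner (gy xb yb) (w - yb) \<le> F w" if "w \<in> edom fs" for w
    using cluster_y_subgrad[OF xb yb _ that] by blast
  then show ?thesis using saddle_setI[OF xb yb x_subgrad] by blast
qed

text \<open>With a saddle point (xb, yb) as reference, the energy minus the accumulated averages is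
  nonincreasing, so the energy converges; along the subsequence it tends to 0.\<close>

lemma energy_tendsto_zero:
  assumes c: "cluster_seq \<rho> xb yb" and s: "(xb, yb) \<in> saddle_set g fs gx gy"
  shows "(\<lambda>n. energy xb yb (Suc n)) \<longlonglongrightarrow> 0"
proof -
  have \<rho>: "strict_mono \<rho>" using c by (simp add: cluster_seq_def)
  define E where "E n = energy xb yb (Suc n)" for n
  define W where "W n = E n - (1 - \<nu>) * (\<Sum>i<Suc n. avg_res i)" for n
  have "decseq W"
  proof (rule decseq_SucI)
    show "W (Suc n) \<le> W n" for n
    proof -
      have "\<nu> * res (Suc n) \<le> res (Suc n)"
        using res_nonneg[of "Suc n"] \<nu> by (simp add: mult_left_le_one_le)
      then show ?thesis
        using energy_decrease[OF s, of "Suc n"] unfolding W_def E_def by (simp add: algebra_simps)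
    qed
  qed
  moreover have "- ((1 - \<nu>) * suminf avg_res) \<le> W n" for n
  proof -
    have "(\<Sum>i<Suc n. avg_res i) \<le> suminf avg_res"
      by (rule sum_le_suminf[OF summable_avg_res]) (auto simp: avg_res_nonneg)
    then have "(1 - \<nu>) * (\<Sum>i<Suc n. avg_res i) \<le> (1 - \<nu>) * suminf avg_res"
      using \<nu> by (intro mult_left_mono) auto
    then show ?thesis
      using energy_nonneg[of xb yb "Suc n"] unfolding W_def E_def by linarith
  qed
  ultimately obtain l where "W \<longlonglongrightarrow> l" using decseq_convergent by blast
  moreover have "(\<lambda>n. \<Sum>i<Suc n. avg_res i) \<longlonglongrightarrow> suminf avg_res"
    using LIMSEQ_Suc[OF summable_LIMSEQ[OF summable_avg_res]] by simp
  ultimately have "(\<lambda>n. W n + (1 - \<nu>) * (\<Sum>i<Suc n. avg_res i)) \<longlonglongrightarrow> l + (1 - \<nu>) * suminf avg_res"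
    by (intro tendsto_intros)
  then have E: "E \<longlonglongrightarrow> l + (1 - \<nu>) * suminf avg_res" by (simp add: W_def)
  have "(\<lambda>k. E (\<rho> k)) \<longlonglongrightarrow> l + (1 - \<nu>) * suminf avg_res"
    using LIMSEQ_subseq_LIMSEQ[OF E \<rho>] by (simp add: o_def)
  moreover have "(\<lambda>k. E (\<rho> k)) \<longlonglongrightarrow> 0"
    using energy_limit_at_cluster(2)[OF c, of yb] by (simp add: E_def)
  ultimately have "l + (1 - \<nu>) * suminf avg_res = 0" using LIMSEQ_unique by blast
  then have "E \<longlonglongrightarrow> 0" using E by simp
  then show ?thesis by (simp add: E_def[abs_def])
qed

lemma converges_of_energy_tendsto_zero:
  assumes E: "(\<lambda>n. energy xb yb (Suc n)) \<longlonglongrightarrow> 0"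
  shows "x \<longlonglongrightarrow> xb" "y \<longlonglongrightarrow> yb"
proof -
  have "(\<lambda>n. y n - yb) \<longlonglongrightarrow> 0"
  proof (rule Lim_null_comparison)
    show "eventually (\<lambda>n. norm (y n - yb) \<le> sqrt (\<beta> * energy xb yb (Suc n))) sequentially"
    proof (intro always_eventually allI)
      fix n
      have "(1 / \<beta>) * (norm (y n - yb))\<^sup>2 \<le> energy xb yb (Suc n)"
        using \<psi> \<omega>_pos delta_pos[of n] unfolding energy_def by simp
      then show "norm (y n - yb) \<le> sqrt (\<beta> * energy xb yb (Suc n))"
        using \<beta> by (simp add: real_le_rsqrt divide_le_eq mult.commute)
    qed
    show "(\<lambda>n. sqrt (\<beta> * energy xb yb (Suc n))) \<longlonglongrightarrow> 0"
      using tendsto_real_sqrt[OF tendsto_mult_right_zero[OF E, of \<beta>]] by simp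
  qed
  then show "y \<longlonglongrightarrow> yb" by (simp add: LIM_zero_iff)
  have "(\<lambda>n. z (Suc (Suc n)) - xb) \<longlonglongrightarrow> 0"
  proof (rule Lim_null_comparison)
    show "eventually (\<lambda>n. norm (z (Suc (Suc n)) - xb)
        \<le> sqrt (((\<psi> - 1) / \<psi>) * energy xb yb (Suc n))) sequentially"
    proof (intro always_eventually allI)
      fix n
      have "(\<psi> / (\<psi> - 1)) * (norm (z (Suc (Suc n)) - xb))\<^sup>2 \<le> energy xb yb (Suc n)"
        using \<beta> \<omega>_pos delta_pos[of n] unfolding energy_def by simp
      from mult_left_mono[OF this, of "(\<psi> - 1) / \<psi>"]
      show "norm (z (Suc (Suc n)) - xb) \<le> sqrt (((\<psi> - 1) / \<psi>) * energy xb yb (Suc n))"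
        using \<psi> by (simp add: real_le_rsqrt)
    qed
    show "(\<lambda>n. sqrt (((\<psi> - 1) / \<psi>) * energy xb yb (Suc n))) \<longlonglongrightarrow> 0"
      using tendsto_real_sqrt[OF tendsto_mult_right_zero[OF E, of "(\<psi> - 1) / \<psi>"]] by simp
  qed
  then have "(\<lambda>n. x (Suc n) - xb) \<longlonglongrightarrow> 0"
    using tendsto_diff[OF _ LIMSEQ_Suc[OF z_Suc_minus_x_tendsto_zero]] by fastforce
  then show "x \<longlonglongrightarrow> xb" using LIMSEQ_imp_Suc by (auto simp: LIM_zero_iff)
qed

lemma pdacl_converges: "\<exists>(xs, ys) \<in> saddle_set g fs gx gy. x \<longlonglongrightarrow> xs \<and> y \<longlonglongrightarrow> ys"
proof -
  obtain \<rho> xb yb where c: "cluster_seq \<rho> xb yb" by (rule cluster_seq_exists)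
  have s: "(xb, yb) \<in> saddle_set g fs gx gy" by (rule cluster_in_saddle_set[OF c])
  then have "(\<lambda>n. energy xb yb (Suc n)) \<longlonglongrightarrow> 0" by (rule energy_tendsto_zero[OF c])
  then show ?thesis using s converges_of_energy_tendsto_zero by blast
qed

end

theorem theorem3p1:
  fixes f :: "'b::euclidean_space \<Rightarrow> ereal"
    and g :: "'a::euclidean_space \<Rightarrow> ereal"
    and \<Phi> :: "'a \<Rightarrow> 'b \<Rightarrow> real"
    and gx :: "'a \<Rightarrow> 'b \<Rightarrow> 'a" and gy :: "'a \<Rightarrow> 'b \<Rightarrow> 'b"
    and \<psi> \<xi> \<phi> \<tau>max \<nu> \<mu> \<eta> \<beta> :: real and M :: nat
    and x :: "nat \<Rightarrow> 'a" and y :: "nat \<Rightarrow> 'b" and z :: "nat \<Rightarrow> 'a"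
    and \<tau> \<delta> :: "nat \<Rightarrow> real"
  assumes f: "proper_closed_convex f"
    and g: "proper_closed_convex g"
    and \<Phi>_cont: "continuous_on (edom g \<times> edom (fenchel_conj f)) (\<lambda>(u, v). \<Phi> u v)"
    \<comment> \<open>(A1)\<close>
    and A1_nonempty: "saddle_set g (fenchel_conj f) gx gy \<noteq> {}"
    and A1_finite: "\<forall>(xs, ys) \<in> saddle_set g (fenchel_conj f) gx gy.
                      \<bar>g xs + ereal (\<Phi> xs ys) - fenchel_conj f ys\<bar> \<noteq> \<infinity>"
    \<comment> \<open>(A2)\<close>
    and A2_x: "\<forall>v \<in> edom (fenchel_conj f).
                 convex_on (edom g) (\<lambda>u. \<Phi> u v) \<and>
                 (\<forall>u \<in> edom g. ((\<lambda>u'. \<Phi> u' v) has_derivative (\<lambda>h. inner (gx u v) h)) (at u))"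
    and A2_y: "\<forall>u \<in> edom g.
                 concave_on (edom (fenchel_conj f)) (\<lambda>v. \<Phi> u v) \<and>
                 (\<forall>v \<in> edom (fenchel_conj f).
                    ((\<lambda>v'. \<Phi> u v') has_derivative (\<lambda>h. inner (gy u v) h)) (at v))"
    and A2_lip: "\<forall>X Y. bounded (X :: 'a set) \<longrightarrow> bounded (Y :: 'b set) \<longrightarrow>
                   (\<exists>Lyy Lxx Lxy. Lyy \<ge> 0 \<and> Lxx \<ge> 0 \<and> Lxy > 0 \<and>
                     (\<forall>u \<in> X \<inter> edom g. \<forall>u' \<in> X \<inter> edom g.
                      \<forall>v \<in> Y \<inter> edom (fenchel_conj f). \<forall>v' \<in> Y \<inter> edom (fenchel_conj f).
                        norm (gy u v - gy u v') \<le> Lyy * norm (v - v') \<and>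
                        norm (gx u v - gx u' v') \<le> Lxx * norm (u - u') + Lxy * norm (v - v')))"
    \<comment> \<open>parameters of PDAc-L\<close>
    and \<psi>: "1 < \<psi>" "\<psi> < 1 + sqrt 3"
    and \<xi>: "\<xi> > 0" and \<phi>: "\<phi> > 1"
    and \<omega>: "2 * \<psi> - \<xi> - \<psi> ^ 3 * \<phi> / (1 + \<psi>) > 0"
    and \<tau>max: "\<tau>max > 0"
    and \<nu>: "0 < \<nu>" "\<nu> < 1" and \<mu>: "0 < \<mu>" "\<mu> < 1" and \<eta>: "0 \<le> \<eta>" "\<eta> < 1"
    and M: "M \<ge> 1" and \<beta>: "\<beta> > 0"
    and x0: "x 0 \<in> edom g" and y0: "y 0 \<in> edom (fenchel_conj f)"
    and \<tau>0: "0 < \<tau> 0" "\<tau> 0 \<le> \<tau>max"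
    and gen: "pdacl_seq g (fenchel_conj f) \<Phi> gx gy \<psi> \<xi> \<phi> \<tau>max \<nu> \<mu> \<eta> M \<beta> x y z \<tau> \<delta>"
  shows "\<exists>(xs, ys) \<in> saddle_set g (fenchel_conj f) gx gy. x \<longlonglongrightarrow> xs \<and> y \<longlonglongrightarrow> ys"
proof -
  interpret pdacl f g \<Phi> gx gy \<psi> \<xi> \<phi> \<tau>max \<nu> \<mu> \<eta> \<beta> M x y z \<tau> \<delta>
    by unfold_locales (fact assms)+
  show ?thesis by (rule pdacl_converges)
qed

end
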